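(* Let $k,\ell\in\mathbb Z_{\ge1}$. Put $\theta=\theta_{(k,\ell)}=\frac13(k+\ell,\ell-2k,k-2\ell)$ and $\theta'=\theta'_{(k,\ell)}=\frac13(2k-\ell,2\ell-k,-(k+\ell))$. All maps below are the $\mathfrak g$-homomorphisms between the indicated Verma modules determined by $1\otimes\mathbb 1\mapsto u\otimes\mathbb 1$ as in the context, and they are $(\mathfrak g,B)$-homomorphisms. (1) If $k<\ell$: with $\varphi_2^{(\ell)}:N(s_\beta s_\alpha\theta)^{((-)^\ell,(-)^k)}\to N(s_\alpha\theta)^{(+,(-)^k)}$, $\varphi_1^{(k)}:N(s_\alpha\theta)^{(+,(-)^k)}\to N(\theta)^{(+,+)}$, $\varphi_1^{(\ell-k)}:N(s_\gamma\theta)^{((-)^\ell,(-)^\ell)}\to N(s_\beta s_\alpha\theta)^{((-)^\ell,(-)^k)}$, $\varphi_+^{(k,\ell)}:N(s_\beta s_\alpha\theta)\to N(\theta)$, $\varphi_-^{(\ell-k,\ell)}:N(s_\gamma\theta)\to N(s_\alpha\theta)$, $\varphi_c^{(2k-\ell;\ell)}:N(s_\gamma\theta)\to N(\theta)$, one has $\varphi_+^{(k,\ell)}=\varphi_1^{(k)}\circ\varphi_2^{(\ell)}$, $\varphi_-^{(\ell-k,\ell)}=\varphi_2^{(\ell)}\circ\varphi_1^{(\ell-k)}$, and $\varphi_c^{(2k-\ell;\ell)}=\varphi_+^{(k,\ell)}\circ\varphi_1^{(\ell-k)}=\varphi_1^{(k)}\circ\varphi_-^{(\ell-k,\ell)}=\varphi_1^{(k)}\circ\varphi_2^{(\ell)}\circ\varphi_1^{(\ell-k)}$.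 (2) If $k>\ell$: with $\varphi_1^{(k-\ell)}:N(s_\beta s_\alpha\theta)^{((-)^\ell,(-)^k)}\to N(s_\gamma\theta)^{((-)^\ell,(-)^\ell)}$, $\varphi_c^{(2k-\ell;\ell)}:N(s_\gamma\theta)\to N(\theta)^{(+,+)}$ and $\varphi_2^{(\ell)},\varphi_1^{(k)},\varphi_+^{(k,\ell)}$ as in (1), one has $\varphi_c^{(2k-\ell;\ell)}\circ\varphi_1^{(k-\ell)}=\varphi_+^{(k,\ell)}=\varphi_1^{(k)}\circ\varphi_2^{(\ell)}$. (3) If $k>\ell$: with $\varphi_2^{(k-\ell)}:N(s_\gamma\theta')^{((-)^k,(-)^k)}\to N(s_\alpha s_\beta\theta')^{((-)^\ell,(-)^k)}$, $\varphi_1^{(k)}:N(s_\alpha s_\beta\theta')\to N(s_\beta\theta')^{((-)^\ell,+)}$, $\varphi_2^{(\ell)}:N(s_\beta\theta')\to N(\theta')^{(+,+)}$, $\varphi_+^{(k,k-\ell)}:N(s_\gamma\theta')\to N(s_\beta\theta')$, $\varphi_-^{(k,\ell)}:N(s_\alpha s_\beta\theta')\to N(\theta')$, $\varphi_c^{(k-2\ell;k)}:N(s_\gamma\theta')\to N(\theta')$, one has $\varphi_+^{(k,k-\ell)}=\varphi_1^{(k)}\circ\varphi_2^{(k-\ell)}$, $\varphi_-^{(k,\ell)}=\varphi_2^{(\ell)}\circ\varphi_1^{(k)}$, and $\varphi_c^{(k-2\ell;k)}=\varphi_2^{(\ell)}\circ\varphi_+^{(k,k-\ell)}=\varphi_-^{(k,\ell)}\circ\varphi_2^{(k-\ell)}=\varphi_2^{(\ell)}\circ\varphi_1^{(k)}\circ\varphi_2^{(k-\ell)}$.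 (4) If $k<\ell$: with $\varphi_2^{(\ell-k)}:N(s_\alpha s_\beta\theta')^{((-)^\ell,(-)^k)}\to N(s_\gamma\theta')^{((-)^k,(-)^k)}$, $\varphi_c^{(k-2\ell;k)}:N(s_\gamma\theta')\to N(\theta')^{(+,+)}$ and $\varphi_1^{(k)},\varphi_2^{(\ell)},\varphi_-^{(k,\ell)}$ as in (3), one has $\varphi_c^{(k-2\ell;k)}\circ\varphi_2^{(\ell-k)}=\varphi_-^{(k,\ell)}=\varphi_2^{(\ell)}\circ\varphi_1^{(k)}$. (5) If $k=\ell$: $\varphi_c^{(k;k)}=\varphi_+^{(k,k)}=\varphi_1^{(k)}\circ\varphi_2^{(k)}$ as maps $N(s_\gamma\theta_{(k,k)})^{((-)^k,(-)^k)}\to N(\theta_{(k,k)})^{(+,+)}$, with $\varphi_2^{(k)}$ landing in $N(s_\alpha\theta_{(k,k)})^{(+,(-)^k)}$. (6) If $k=\ell$: $\varphi_c^{(-k;k)}=\varphi_-^{(k,k)}=\varphi_2^{(k)}\circ\varphi_1^{(k)}$ as maps $N(s_\gamma\theta'_{(k,k)})^{((-)^k,(-)^k)}\to N(\theta'_{(k,k)})^{(+,+)}$, with $\varphi_1^{(k)}$ landing in $N(s_\beta\theta'_{(k,k)})^{((-)^k,+)}$.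
   Context: $\mathfrak g=\mathfrak{sl}(3,\mathbb C)$, $G=SL(3,\mathbb R)$, $B=MAN_+$ with $M$ the diagonal matrices with entries $\pm1$, $A=\exp(\mathbb RH_1+\mathbb RH_2)$ ($H_1=\mathrm{diag}(1,-1,0)$, $H_2=\mathrm{diag}(0,1,-1)$), $N_+$ upper unitriangular. $N_1^-=E_{2,1},N_2^-=E_{3,2},N_3^-=E_{3,1}$. Identify the Cartan dual with $\{v\in\mathbb C^3:v_1+v_2+v_3=0\}$; $\varpi_1=\frac13(2,-1,-1)$, $\varpi_2=\frac13(1,1,-2)$, $\rho=(1,0,-1)$. For such $\mu$ and $\varepsilon\in\{\pm\}^2$, $N(\mu)^{(\varepsilon)}=\mathcal U(\mathfrak g)\otimes_{\mathcal U(\mathfrak b)}(\mathbb C_\varepsilon\boxtimes\mathbb C_{\mu-\rho})$ is the Verma module of highest weight $\mu-\rho$, a $(\mathfrak g,B)$-module where $M$ acts on $\mathbb C_\varepsilon$ by $\mathrm{diag}(b_1,b_2,b_3)\mapsto|b_1|_{\varepsilon_1}|b_3|_{\varepsilon_2}$ ($|b|_+=|b|$, $|b|_-=b$) and $B$ acts diagonally; $\mathbb 1$ is the generator of $\mathbb C$. $s_\alpha,s_\beta,s_\gamma$ swap coordinates $1\leftrightarrow2$, $2\leftrightarrow3$, $1\leftrightarrow3$. $(-)^n=+$ for even $n$, $-$ for odd $n$. $\mathbf s(\cdot)$ = average over all orderings of a monomial. $\mathrm{Cay}_m(x;y)=\sum_{j=0}^m\binom mj(\frac{x+y}2)^{\underline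 j}(\frac{x-y}2)^{\overline{m-j}}$. The maps: $\varphi_1^{(n)}$: $1\otimes\mathbb 1\mapsto(N_1^-)^n\otimes\mathbb 1$; $\varphi_2^{(n)}$: $1\otimes\mathbb 1\mapsto(N_2^-)^n\otimes\mathbb 1$; $\varphi_\pm^{(a,b)}$: $1\otimes\mathbb 1\mapsto\sum_{m=0}^{\min(a,b)}\frac{(\pm1)^m}{2^m}m!\binom am\binom bm\mathbf s((N_1^-)^{a-m}(N_2^-)^{b-m}(N_3^-)^m)\otimes\mathbb 1$; $\varphi_c^{(s;n)}$: $1\otimes\mathbb 1\mapsto\sum_{m=0}^n\frac1{2^m}\binom nm\mathrm{Cay}_m(s;n)\mathbf s((N_1^-)^{n-m}(N_2^-)^{n-m}(N_3^-)^m)\otimes\mathbb 1$. $\circ$ is composition of module maps. *)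

theory Defs
  imports Complex_Main
begin

text \<open>Basis of sl(3,C): the root vectors E_ij (1-indexed, i \<noteq> j) and H1 = diag(1,-1,0),
  H2 = diag(0,1,-1).\<close>
datatype gen = E12 | E13 | E21 | E23 | E31 | E32 | H1 | H2

definition allgens :: "gen set" where
  "allgens = {E12, E13, E21, E23, E31, E32, H1, H2}"

text \<open>3x3 matrices with 0-indexed entries.\<close>
type_synonym mat3 = "nat \<Rightarrow> nat \<Rightarrow> complex"

definition unitm :: "nat \<Rightarrow> nat \<Rightarrow> mat3" where
  "unitm a b = (\<lambda>i j. if i = a \<and> j = b then 1 else 0)"

fun gmat :: "gen \<Rightarrow> mat3" where
  "gmat E12 = unitm 0 1" | "gmat E13 = unitm 0 2" | "gmat E21 = unitm 1 0"
| "gmat E23 = unitm 1 2" | "gmat E31 = unitm 2 0" | "gmat E32 = unitm 2 1"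
| "gmat H1 = (\<lambda>i j. if i = j then (if i = 0 then 1 else if i = 1 then -1 else 0) else 0)"
| "gmat H2 = (\<lambda>i j. if i = j then (if i = 1 then 1 else if i = 2 then -1 else 0) else 0)"

definition matmul :: "mat3 \<Rightarrow> mat3 \<Rightarrow> mat3" where
  "matmul A B = (\<lambda>i j. \<Sum>r<3. A i r * B r j)"

definition mbracket :: "gen \<Rightarrow> gen \<Rightarrow> mat3" where
  "mbracket x y = (\<lambda>i j. matmul (gmat x) (gmat y) i j - matmul (gmat y) (gmat x) i j)"

text \<open>Coordinates of a traceless matrix in the basis above
  (diag(d0,d1,d2) = d0 H1 + (-d2) H2 when d0+d1+d2 = 0).\<close>
fun coord :: "mat3 \<Rightarrow> gen \<Rightarrow> complex" where
  "coord M E12 = M 0 1" | "coord M E13 = M 0 2" | "coord M E21 = M 1 0"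
| "coord M E23 = M 1 2" | "coord M E31 = M 2 0" | "coord M E32 = M 2 1"
| "coord M H1 = M 0 0" | "coord M H2 = - M 2 2"

type_synonym fa = "gen list \<Rightarrow> complex"

definition FA :: "fa set" where
  "FA = {p. finite {w. p w \<noteq> 0}}"

definition fa_word :: "gen list \<Rightarrow> fa" where
  "fa_word w = (\<lambda>v. if v = w then 1 else 0)"

definition fa_add :: "fa \<Rightarrow> fa \<Rightarrow> fa" where
  "fa_add p q = (\<lambda>w. p w + q w)"

definition fa_sub :: "fa \<Rightarrow> fa \<Rightarrow> fa" where
  "fa_sub p q = (\<lambda>w. p w - q w)"

definition fa_smul :: "complex \<Rightarrow> fa \<Rightarrow> fa" where
  "fa_smul c p = (\<lambda>w. c * p w)"

definition fa_const :: "complex \<Rightarrow> fa" where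
  "fa_const c = fa_smul c (fa_word [])"

definition fa_mul :: "fa \<Rightarrow> fa \<Rightarrow> fa" where
  "fa_mul p q = (\<lambda>w. \<Sum>i\<le>length w. p (take i w) * q (drop i w))"

definition urel :: "gen \<Rightarrow> gen \<Rightarrow> fa" where
  "urel x y = (\<lambda>w. fa_word [x, y] w - fa_word [y, x] w
                 - (\<Sum>g\<in>allgens. coord (mbracket x y) g * fa_word [g] w))"

text \<open>Weights are identified with triples (v1,v2,v3) (with v1+v2+v3 = 0);
  the pairing with H1, H2 is v1-v2, v2-v3.  rho = (1,0,-1).\<close>
type_synonym wt = "complex \<times> complex \<times> complex"

definition w1 :: "wt \<Rightarrow> complex" where "w1 v = fst v"
definition w2 :: "wt \<Rightarrow> complex" where "w2 v = fst (snd v)"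
definition w3 :: "wt \<Rightarrow> complex" where "w3 v = snd (snd v)"

definition rho :: wt where "rho = (1, 0, -1)"

definition wsub :: "wt \<Rightarrow> wt \<Rightarrow> wt" where
  "wsub u v = (w1 u - w1 v, w2 u - w2 v, w3 u - w3 v)"

text \<open>Generators of the left ideal annihilating the highest weight vector of weight lam:
  the positive root vectors and H - lam(H).\<close>
definition borel_gens :: "wt \<Rightarrow> fa set" where
  "borel_gens lam = {fa_word [E12], fa_word [E13], fa_word [E23],
      fa_sub (fa_word [H1]) (fa_const (w1 lam - w2 lam)),
      fa_sub (fa_word [H2]) (fa_const (w2 lam - w3 lam))}"

text \<open>Kernel of the projection T(g) \<rightarrow> N(mu) = U(g) \<otimes>_{U(b)} C_{mu-rho}:
  the two-sided ideal of the U(g)-relations plus the left ideal generated by borel_gens (mu - rho).\<close>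
inductive_set verma_ker :: "wt \<Rightarrow> fa set" for mu :: wt where
  vk_zero: "(\<lambda>_. 0) \<in> verma_ker mu"
| vk_rel: "a \<in> FA \<Longrightarrow> b \<in> FA \<Longrightarrow> fa_mul (fa_mul a (urel x y)) b \<in> verma_ker mu"
| vk_left: "a \<in> FA \<Longrightarrow> g \<in> borel_gens (wsub mu rho) \<Longrightarrow> fa_mul a g \<in> verma_ker mu"
| vk_add: "p \<in> verma_ker mu \<Longrightarrow> q \<in> verma_ker mu \<Longrightarrow> fa_add p q \<in> verma_ker mu"

text \<open>Map N(mu) \<rightarrow> N(mu') determined by 1 \<otimes> 1 \<mapsto> u \<otimes> 1, on representatives.\<close>
definition vmap :: "fa \<Rightarrow> fa \<Rightarrow> fa" where
  "vmap u = (\<lambda>p. fa_mul p u)"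

definition map_eq :: "wt \<Rightarrow> (fa \<Rightarrow> fa) \<Rightarrow> (fa \<Rightarrow> fa) \<Rightarrow> bool" where
  "map_eq mu f g \<longleftrightarrow> (\<forall>p\<in>FA. fa_sub (f p) (g p) \<in> verma_ker mu)"

text \<open>Signs: True = +, False = -.  (-)^n = + iff n is even.\<close>
type_synonym sgn2 = "bool \<times> bool"

definition sgnpow :: "nat \<Rightarrow> bool" where "sgnpow n = even n"

text \<open>M = diagonal matrices diag(m1,m2,m3) with entries \<plusminus>1 and determinant 1.\<close>
definition Mgrp :: "wt set" where
  "Mgrp = {m. w1 m \<in> {1, -1} \<and> w2 m \<in> {1, -1} \<and> w3 m \<in> {1, -1} \<and> w1 m * w2 m * w3 m = 1}"

definition absign :: "bool \<Rightarrow> complex \<Rightarrow> complex" where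
  "absign e b = (if e then complex_of_real (cmod b) else b)"

definition chi :: "sgn2 \<Rightarrow> wt \<Rightarrow> complex" where
  "chi eps m = absign (fst eps) (w1 m) * absign (snd eps) (w3 m)"

text \<open>Ad(m) on basis elements.\<close>
fun gsign :: "wt \<Rightarrow> gen \<Rightarrow> complex" where
  "gsign m E12 = w1 m * w2 m" | "gsign m E13 = w1 m * w3 m" | "gsign m E21 = w2 m * w1 m"
| "gsign m E23 = w2 m * w3 m" | "gsign m E31 = w3 m * w1 m" | "gsign m E32 = w3 m * w2 m"
| "gsign m H1 = 1" | "gsign m H2 = 1"

definition fa_Ad :: "wt \<Rightarrow> fa \<Rightarrow> fa" where
  "fa_Ad m p = (\<lambda>w. (\<Prod>g\<leftarrow>w. gsign m g) * p w)"

text \<open>1 \<otimes> 1 \<mapsto> u \<otimes> 1 defines a (g,B)-homomorphism N(mus)^(epss) \<rightarrow> N(mut)^(epst):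
  it is well defined (hence a g-homomorphism) and commutes with the M-action
  m.(x \<otimes> 1) = Ad(m)x \<otimes> chi_eps(m)  (the identity component AN_+ is automatic).\<close>
definition gB_hom :: "wt \<Rightarrow> sgn2 \<Rightarrow> wt \<Rightarrow> sgn2 \<Rightarrow> fa \<Rightarrow> bool" where
  "gB_hom mus epss mut epst u \<longleftrightarrow> u \<in> FA
     \<and> (\<forall>p\<in>verma_ker mus. fa_mul p u \<in> verma_ker mut)
     \<and> (\<forall>m\<in>Mgrp. fa_sub (fa_Ad m u) (fa_smul (chi epss m / chi epst m) u) \<in> verma_ker mut)"

definition sA :: "wt \<Rightarrow> wt" where "sA v = (w2 v, w1 v, w3 v)"
definition sB :: "wt \<Rightarrow> wt" where "sB v = (w1 v, w3 v, w2 v)"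
definition sG :: "wt \<Rightarrow> wt" where "sG v = (w3 v, w2 v, w1 v)"

definition theta :: "nat \<Rightarrow> nat \<Rightarrow> wt" where
  "theta k l = ((of_nat k + of_nat l) / 3, (of_nat l - 2 * of_nat k) / 3, (of_nat k - 2 * of_nat l) / 3)"

definition theta' :: "nat \<Rightarrow> nat \<Rightarrow> wt" where
  "theta' k l = ((2 * of_nat k - of_nat l) / 3, (2 * of_nat l - of_nat k) / 3, - (of_nat k + of_nat l) / 3)"

text \<open>N1 = E21, N2 = E32, N3 = E31.\<close>
definition u1 :: "nat \<Rightarrow> fa" where "u1 n = fa_word (replicate n E21)"
definition u2 :: "nat \<Rightarrow> fa" where "u2 n = fa_word (replicate n E32)"

text \<open>s(N1^a N2^b N3^c): the average over all orderings of the monomial.\<close>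
definition orderings :: "nat \<Rightarrow> nat \<Rightarrow> nat \<Rightarrow> gen list set" where
  "orderings a b c = {w. set w \<subseteq> {E21, E32, E31} \<and> count_list w E21 = a
                        \<and> count_list w E32 = b \<and> count_list w E31 = c}"

definition fa_sym :: "nat \<Rightarrow> nat \<Rightarrow> nat \<Rightarrow> fa" where
  "fa_sym a b c = (\<lambda>v. if v \<in> orderings a b c then 1 / of_nat (card (orderings a b c)) else 0)"

definition ffall :: "complex \<Rightarrow> nat \<Rightarrow> complex" where
  "ffall x j = (\<Prod>i<j. (x - of_nat i))"

definition Cay :: "nat \<Rightarrow> complex \<Rightarrow> complex \<Rightarrow> complex" where
  "Cay m x y = (\<Sum>j\<le>m. of_nat (m choose j) * ffall ((x + y) / 2) j * pochhammer ((x - y) / 2) (m - j))"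

text \<open>phi_+ (sg = 1) and phi_- (sg = -1).\<close>
definition upm :: "complex \<Rightarrow> nat \<Rightarrow> nat \<Rightarrow> fa" where
  "upm sg a b = (\<lambda>v. \<Sum>m\<le>min a b. sg ^ m / 2 ^ m * fact m * of_nat (a choose m) * of_nat (b choose m)
                       * fa_sym (a - m) (b - m) m v)"

definition uc :: "int \<Rightarrow> nat \<Rightarrow> fa" where
  "uc s n = (\<lambda>v. \<Sum>m\<le>n. 1 / 2 ^ m * of_nat (n choose m) * Cay m (of_int s) (of_nat n)
                       * fa_sym (n - m) (n - m) m v)"

end

theory Submission
  imports Defs "HOL-Combinatorics.Multiset_Permutations"
begin

(* A map of Verma modules given by
   1 \<otimes> 1 \<mapsto> u \<otimes> 1 is right multiplication by u, so each equality of compositions is an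
   identity in U, and each homomorphism property says that E12, E23 and H - \<lambda>(H) send u into the
   annihilator of the highest weight vector.

   Every element met here has a PBW normal form \<Sum>_z c_z N1^(A-z) N2^(B-z) N3^z.  The normal form of
   a symmetrised monomial is explicit, and Vandermonde-type convolutions then show that u for
   \<phi>_+, \<phi>_- and \<phi>_c all have the hypergeometric coefficients c_z = (A)_z (w)_z / z! with
   w = B, 0 and (s+n)/2.  Left multiplication by N1^p pads such a normal form with zeros and left
   multiplication by N2^q replaces w by w + q, which yields all composition identities.  On normal
   forms, E12 and E23 act by two-term recursions on the coefficients, and (A)_z (w)_z / z! solves
   them exactly at the weights of the theorem; M-equivariance is a parity count of the letters. *)

section \<open>The free associative algebra\<close>

definition splits :: "'a list \<Rightarrow> ('a list \<times> 'a list) set" where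
  "splits w = {(u,v). u @ v = w}"

lemma splits_eq: "splits w = (\<lambda>i. (take i w, drop i w)) ` {..length w}"
proof -
  have "(u, v) \<in> (\<lambda>i. (take i w, drop i w)) ` {..length w}" if "u @ v = w" for u v
    using that by (auto intro!: image_eqI[where x="length u"])
  then show ?thesis unfolding splits_def by auto
qed

lemma finite_splits[simp]: "finite (splits w)"
  by (simp add: splits_eq)

lemma fa_mul_splits: "fa_mul p q w = (\<Sum>(u,v)\<in>splits w. p u * q v)"
proof -
  have inj: "inj_on (\<lambda>i. (take i w, drop i w)) {..length w}"
    by (rule inj_onI) (metis atMost_iff length_take min.absorb2 prod.inject)
  show ?thesis unfolding fa_mul_def splits_eq
    by (subst sum.reindex[OF inj]) (simp add: case_prod_beta)
qed

lemma fa_mul_assoc: "fa_mul (fa_mul p q) r = fa_mul p (fa_mul q r)"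
proof (rule ext)
  fix w
  have L: "fa_mul (fa_mul p q) r w = (\<Sum>((x,c),(a,b))\<in>Sigma (splits w) (\<lambda>(x,c). splits x). p a * q b * r c)"
    unfolding fa_mul_splits
    by (subst sum.Sigma[symmetric]) (auto simp: sum_distrib_right case_prod_beta intro!: sum.cong)
  have R: "fa_mul p (fa_mul q r) w = (\<Sum>((a,y),(b,c))\<in>Sigma (splits w) (\<lambda>(a,y). splits y). p a * q b * r c)"
    unfolding fa_mul_splits
    by (subst sum.Sigma[symmetric]) (auto simp: sum_distrib_left case_prod_beta mult.assoc intro!: sum.cong)
  show "fa_mul (fa_mul p q) r w = fa_mul p (fa_mul q r) w"
    unfolding L R
    apply (rule sum.reindex_bij_witness[where i="\<lambda>((a,y),(b,c)). ((a@b,c),(a,b))" and j="\<lambda>((x,c),(a,b)). ((a,b@c),(b,c))"])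
    by (auto simp: splits_def)
qed

lemma fa_mul_add_left: "fa_mul (fa_add p q) r = fa_add (fa_mul p r) (fa_mul q r)"
  by (simp add: fa_mul_def fa_add_def fun_eq_iff distrib_right sum.distrib)
lemma fa_mul_add_right: "fa_mul r (fa_add p q) = fa_add (fa_mul r p) (fa_mul r q)"
  by (simp add: fa_mul_def fa_add_def fun_eq_iff distrib_left sum.distrib)
lemma fa_mul_sub_left: "fa_mul (fa_sub p q) r = fa_sub (fa_mul p r) (fa_mul q r)"
  by (simp add: fa_mul_def fa_sub_def fun_eq_iff left_diff_distrib sum_subtractf)
lemma fa_mul_sub_right: "fa_mul r (fa_sub p q) = fa_sub (fa_mul r p) (fa_mul r q)"
  by (simp add: fa_mul_def fa_sub_def fun_eq_iff right_diff_distrib sum_subtractf)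
lemma fa_mul_smul_left: "fa_mul (fa_smul c p) r = fa_smul c (fa_mul p r)"
  by (simp add: fa_mul_def fa_smul_def fun_eq_iff sum_distrib_left mult.assoc)
lemma fa_mul_smul_right: "fa_mul r (fa_smul c p) = fa_smul c (fa_mul r p)"
  by (simp add: fa_mul_def fa_smul_def fun_eq_iff sum_distrib_left mult.left_commute)
lemma fa_mul_zero_left[simp]: "fa_mul (\<lambda>_. 0) r = (\<lambda>_. 0)"
  by (simp add: fa_mul_def fun_eq_iff)
lemma fa_mul_zero_right[simp]: "fa_mul r (\<lambda>_. 0) = (\<lambda>_. 0)"
  by (simp add: fa_mul_def fun_eq_iff)

lemma fa_mul_one_left[simp]: "fa_mul (fa_word []) p = p"
proof (rule ext)
  fix w
  have "fa_mul (fa_word []) p w = (\<Sum>i\<in>{0}. fa_word [] (take i w) * p (drop i w))"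
    unfolding fa_mul_def by (rule sum.mono_neutral_right) (auto simp: fa_word_def)
  then show "fa_mul (fa_word []) p w = p w" by (simp add: fa_word_def)
qed

lemma fa_mul_one_right[simp]: "fa_mul p (fa_word []) = p"
proof (rule ext)
  fix w
  have "fa_mul p (fa_word []) w = (\<Sum>i\<in>{length w}. p (take i w) * fa_word [] (drop i w))"
    unfolding fa_mul_def by (rule sum.mono_neutral_right) (auto simp: fa_word_def)
  then show "fa_mul p (fa_word []) w = p w" by (simp add: fa_word_def)
qed

lemma fa_mul_word: "fa_mul (fa_word u) (fa_word v) = fa_word (u @ v)"
proof (rule ext)
  fix w
  show "fa_mul (fa_word u) (fa_word v) w = fa_word (u @ v) w"
  proof (cases "w = u @ v")
    case True
    have "fa_mul (fa_word u) (fa_word v) w = (\<Sum>(a,b)\<in>{(u,v)}. fa_word u a * fa_word v b)"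
      unfolding fa_mul_splits by (rule sum.mono_neutral_right) (use True finite_splits[of w] in \<open>auto simp: splits_def fa_word_def split: if_splits\<close>)
    then show ?thesis by (simp add: fa_word_def True)
  next
    case False
    have "fa_mul (fa_word u) (fa_word v) w = (\<Sum>(a,b)\<in>{}. fa_word u a * fa_word v b)"
      unfolding fa_mul_splits by (rule sum.mono_neutral_right) (use False finite_splits[of w] in \<open>auto simp: splits_def fa_word_def split: if_splits\<close>)
    then show ?thesis using False by (simp add: fa_word_def)
  qed
qed

lemma fa_mul_nil: "fa_mul p q [] = p [] * q []"
  by (simp add: fa_mul_def)

lemma FA_zero[simp]: "(\<lambda>_. 0) \<in> FA" by (simp add: FA_def)
lemma FA_word[simp]: "fa_word w \<in> FA" by (simp add: FA_def fa_word_def)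
lemma FA_add[simp]: "p \<in> FA \<Longrightarrow> q \<in> FA \<Longrightarrow> fa_add p q \<in> FA"
  unfolding FA_def fa_add_def mem_Collect_eq
  by (rule finite_subset[of _ "{w. p w \<noteq> 0} \<union> {w. q w \<noteq> 0}"]) auto
lemma FA_sub[simp]: "p \<in> FA \<Longrightarrow> q \<in> FA \<Longrightarrow> fa_sub p q \<in> FA"
  unfolding FA_def fa_sub_def mem_Collect_eq
  by (rule finite_subset[of _ "{w. p w \<noteq> 0} \<union> {w. q w \<noteq> 0}"]) auto
lemma FA_smul[simp]: "p \<in> FA \<Longrightarrow> fa_smul c p \<in> FA"
  unfolding FA_def fa_smul_def mem_Collect_eq
  by (rule finite_subset[of _ "{w. p w \<noteq> 0}"]) auto
lemma FA_const[simp]: "fa_const c \<in> FA" by (simp add: fa_const_def)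
lemma FA_mul[simp]: assumes "p \<in> FA" "q \<in> FA" shows "fa_mul p q \<in> FA"
proof -
  let ?P = "{w. p w \<noteq> 0}" and ?Q = "{w. q w \<noteq> 0}"
  have "{w. fa_mul p q w \<noteq> 0} \<subseteq> (\<lambda>(u,v). u @ v) ` (?P \<times> ?Q)"
  proof
    fix w assume "w \<in> {w. fa_mul p q w \<noteq> 0}"
    then have "(\<Sum>(u,v)\<in>splits w. p u * q v) \<noteq> 0" by (simp add: fa_mul_splits)
    then obtain x where "x \<in> splits w" "(case x of (u,v) \<Rightarrow> p u * q v) \<noteq> 0"
      by (rule sum.not_neutral_contains_not_neutral)
    then obtain u v where "(u,v) \<in> splits w" "p u * q v \<noteq> 0" by (cases x) auto
    then show "w \<in> (\<lambda>(u,v). u @ v) ` (?P \<times> ?Q)" by (auto simp: splits_def)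
  qed
  moreover have "finite ((\<lambda>(u,v). u @ v) ` (?P \<times> ?Q))"
    using assms by (simp add: FA_def)
  ultimately show ?thesis unfolding FA_def by (auto intro: finite_subset)
qed

lemma FA_sum: "finite A \<Longrightarrow> (\<And>i. i \<in> A \<Longrightarrow> f i \<in> FA) \<Longrightarrow> (\<lambda>v. \<Sum>i\<in>A. f i v) \<in> FA"
proof (induction A rule: finite_induct)
  case empty then show ?case by simp
next
  case (insert x F)
  then have "fa_add (f x) (\<lambda>v. \<Sum>i\<in>F. f i v) \<in> FA" by simp
  then show ?case using insert by (simp add: fa_add_def)
qed

lemma FA_finite_support: "finite S \<Longrightarrow> (\<And>w. w \<notin> S \<Longrightarrow> p w = 0) \<Longrightarrow> p \<in> FA"
  unfolding FA_def mem_Collect_eq by (rule finite_subset[of _ S]) auto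

section \<open>The enveloping algebra as a quotient ring\<close>

inductive_set rel_ideal :: "fa set" where
  ir_zero: "(\<lambda>_. 0) \<in> rel_ideal"
| ir_rel: "a \<in> FA \<Longrightarrow> b \<in> FA \<Longrightarrow> fa_mul (fa_mul a (urel x y)) b \<in> rel_ideal"
| ir_add: "p \<in> rel_ideal \<Longrightarrow> q \<in> rel_ideal \<Longrightarrow> fa_add p q \<in> rel_ideal"

lemma urel_eq: "urel x y = fa_sub (fa_sub (fa_word [x,y]) (fa_word [y,x]))
    (\<lambda>w. \<Sum>g\<in>allgens. fa_smul (coord (mbracket x y) g) (fa_word [g]) w)"
  by (simp add: urel_def fa_sub_def fa_smul_def fun_eq_iff)

lemma FA_bracket_sum: "(\<lambda>w. \<Sum>g\<in>allgens. fa_smul (coord (mbracket x y) g) (fa_word [g]) w) \<in> FA"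
  by (rule FA_sum) (auto simp: allgens_def)

lemma FA_urel[simp]: "urel x y \<in> FA"
  by (simp add: urel_eq FA_bracket_sum)

lemma rel_ideal_FA: "p \<in> rel_ideal \<Longrightarrow> p \<in> FA"
  by (induction rule: rel_ideal.induct) auto

lemma rel_ideal_verma_ker: "p \<in> rel_ideal \<Longrightarrow> p \<in> verma_ker mu"
  by (induction rule: rel_ideal.induct) (auto intro: verma_ker.intros)

lemma rel_ideal_smul: "p \<in> rel_ideal \<Longrightarrow> fa_smul c p \<in> rel_ideal"
proof (induction rule: rel_ideal.induct)
  case ir_zero then show ?case by (simp add: fa_smul_def rel_ideal.ir_zero)
next
  case (ir_rel a b x y) then show ?case
    using rel_ideal.ir_rel[of "fa_smul c a" b x y] by (simp add: fa_mul_smul_left)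
next
  case (ir_add p q)
  have "fa_smul c (fa_add p q) = fa_add (fa_smul c p) (fa_smul c q)"
    by (simp add: fa_add_def fa_smul_def fun_eq_iff distrib_left)
  then show ?case using ir_add by (simp add: rel_ideal.ir_add)
qed

lemma rel_ideal_lmul: "p \<in> rel_ideal \<Longrightarrow> c \<in> FA \<Longrightarrow> fa_mul c p \<in> rel_ideal"
proof (induction rule: rel_ideal.induct)
  case ir_zero then show ?case by (simp add: rel_ideal.ir_zero)
next
  case (ir_rel a b x y) then show ?case
    using rel_ideal.ir_rel[of "fa_mul c a" b x y] by (simp add: fa_mul_assoc)
next
  case (ir_add p q) then show ?case
    by (simp add: rel_ideal.ir_add fa_mul_add_right)
qed

lemma rel_ideal_rmul: "p \<in> rel_ideal \<Longrightarrow> c \<in> FA \<Longrightarrow> fa_mul p c \<in> rel_ideal"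
proof (induction rule: rel_ideal.induct)
  case ir_zero then show ?case by (simp add: rel_ideal.ir_zero)
next
  case (ir_rel a b x y) then show ?case
    using rel_ideal.ir_rel[of a "fa_mul b c" x y] by (simp add: fa_mul_assoc)
next
  case (ir_add p q) then show ?case
    by (simp add: rel_ideal.ir_add fa_mul_add_left)
qed

lemma rel_ideal_sub: "p \<in> rel_ideal \<Longrightarrow> q \<in> rel_ideal \<Longrightarrow> fa_sub p q \<in> rel_ideal"
proof -
  assume "p \<in> rel_ideal" "q \<in> rel_ideal"
  then have "fa_add p (fa_smul (-1) q) \<in> rel_ideal" by (simp add: rel_ideal_smul ir_add)
  moreover have "fa_add p (fa_smul (-1) q) = fa_sub p q" by (simp add: fa_add_def fa_smul_def fa_sub_def fun_eq_iff)
  ultimately show ?thesis by simp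
qed

lemma rel_ideal_nil: "p \<in> rel_ideal \<Longrightarrow> p [] = 0"
proof (induction rule: rel_ideal.induct)
  case (ir_rel a b x y)
  have "urel x y [] = 0" by (simp add: urel_def fa_word_def)
  then show ?case by (simp add: fa_mul_nil)
qed (auto simp: fa_add_def)

definition rel_eq :: "fa \<Rightarrow> fa \<Rightarrow> bool" where
  "rel_eq p q \<longleftrightarrow> p \<in> FA \<and> q \<in> FA \<and> fa_sub p q \<in> rel_ideal"

lemma fa_sub_self: "fa_sub p p = (\<lambda>_. 0)" by (simp add: fa_sub_def)

lemma rel_eq_self[simp]: "rel_eq p p \<longleftrightarrow> p \<in> FA"
  by (simp add: rel_eq_def fa_sub_self rel_ideal.ir_zero)

lemma part_equivp_rel_eq: "part_equivp rel_eq"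
proof (rule part_equivpI)
  show "\<exists>x. rel_eq x x" by (rule exI[of _ "\<lambda>_. 0"]) simp
  show "symp rel_eq"
  proof (rule sympI)
    fix p q assume "rel_eq p q"
    then have "fa_smul (-1) (fa_sub p q) \<in> rel_ideal" by (simp add: rel_eq_def rel_ideal_smul)
    moreover have "fa_smul (-1) (fa_sub p q) = fa_sub q p" by (simp add: fa_smul_def fa_sub_def fun_eq_iff)
    ultimately show "rel_eq q p" using \<open>rel_eq p q\<close> by (simp add: rel_eq_def)
  qed
  show "transp rel_eq"
  proof (rule transpI)
    fix p q r assume "rel_eq p q" "rel_eq q r"
    then have "fa_add (fa_sub p q) (fa_sub q r) \<in> rel_ideal" by (simp add: rel_eq_def rel_ideal.ir_add)
    moreover have "fa_add (fa_sub p q) (fa_sub q r) = fa_sub p r" by (simp add: fa_add_def fa_sub_def fun_eq_iff)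
    ultimately show "rel_eq p r" using \<open>rel_eq p q\<close> \<open>rel_eq q r\<close> by (simp add: rel_eq_def)
  qed
qed

quotient_type U = fa / partial: rel_eq
  by (rule part_equivp_rel_eq)

lemma rel_eq_add: "rel_eq p p' \<Longrightarrow> rel_eq q q' \<Longrightarrow> rel_eq (fa_add p q) (fa_add p' q')"
proof -
  assume a: "rel_eq p p'" "rel_eq q q'"
  have "fa_sub (fa_add p q) (fa_add p' q') = fa_add (fa_sub p p') (fa_sub q q')"
    by (simp add: fa_add_def fa_sub_def fun_eq_iff)
  then show ?thesis using a by (simp add: rel_eq_def rel_ideal.ir_add)
qed

lemma rel_eq_sub: "rel_eq p p' \<Longrightarrow> rel_eq q q' \<Longrightarrow> rel_eq (fa_sub p q) (fa_sub p' q')"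
proof -
  assume a: "rel_eq p p'" "rel_eq q q'"
  have "fa_sub (fa_sub p q) (fa_sub p' q') = fa_sub (fa_sub p p') (fa_sub q q')"
    by (simp add: fa_sub_def fun_eq_iff)
  then show ?thesis using a by (simp add: rel_eq_def rel_ideal_sub)
qed

lemma rel_eq_smul: "rel_eq p p' \<Longrightarrow> rel_eq (fa_smul c p) (fa_smul c p')"
proof -
  assume a: "rel_eq p p'"
  have "fa_sub (fa_smul c p) (fa_smul c p') = fa_smul c (fa_sub p p')"
    by (simp add: fa_smul_def fa_sub_def fun_eq_iff right_diff_distrib)
  then show ?thesis using a by (simp add: rel_eq_def rel_ideal_smul)
qed

lemma rel_eq_mul: "rel_eq p p' \<Longrightarrow> rel_eq q q' \<Longrightarrow> rel_eq (fa_mul p q) (fa_mul p' q')"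
proof -
  assume a: "rel_eq p p'" "rel_eq q q'"
  have "fa_sub (fa_mul p q) (fa_mul p' q') = fa_add (fa_mul (fa_sub p p') q) (fa_mul p' (fa_sub q q'))"
    by (simp only: fa_mul_sub_left fa_mul_sub_right) (simp add: fa_add_def fa_sub_def fun_eq_iff)
  moreover have "fa_mul (fa_sub p p') q \<in> rel_ideal" using a by (simp add: rel_eq_def rel_ideal_rmul)
  moreover have "fa_mul p' (fa_sub q q') \<in> rel_ideal" using a by (simp add: rel_eq_def rel_ideal_lmul)
  ultimately show ?thesis using a by (simp add: rel_eq_def rel_ideal.ir_add)
qed

lemma fa_add_assoc: "fa_add (fa_add a b) c = fa_add a (fa_add b c)" by (simp add: fa_add_def add.assoc)
lemma fa_add_comm: "fa_add a b = fa_add b a" by (simp add: fa_add_def add.commute)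
lemma fa_add_zero: "fa_add (\<lambda>_. 0) a = a" by (simp add: fa_add_def)
lemma fa_add_neg: "fa_add (fa_smul (-1) a) a = (\<lambda>_. 0)" by (simp add: fa_add_def fa_smul_def)
lemma fa_sub_add: "fa_sub a b = fa_add a (fa_smul (-1) b)" by (simp add: fa_add_def fa_smul_def fa_sub_def)

instantiation U :: ring_1
begin
lift_definition zero_U :: U is "\<lambda>_. 0" by simp
lift_definition one_U :: U is "fa_word []" by simp
lift_definition plus_U :: "U \<Rightarrow> U \<Rightarrow> U" is fa_add by (rule rel_eq_add)
lift_definition uminus_U :: "U \<Rightarrow> U" is "fa_smul (-1)" by (rule rel_eq_smul)
lift_definition minus_U :: "U \<Rightarrow> U \<Rightarrow> U" is fa_sub by (rule rel_eq_sub)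
lift_definition times_U :: "U \<Rightarrow> U \<Rightarrow> U" is fa_mul by (rule rel_eq_mul)
instance
proof
  fix a b c :: U
  show "a * b * c = a * (b * c)" by transfer (simp add: fa_mul_assoc)
  show "1 * a = a" by transfer simp
  show "a * 1 = a" by transfer simp
  show "a + b + c = a + (b + c)" by transfer (simp add: fa_add_assoc)
  show "a + b = b + a" by transfer (simp add: fa_add_comm)
  show "0 + a = a" by transfer (simp add: fa_add_zero)
  show "- a + a = 0" by transfer (simp add: fa_add_neg)
  show "a - b = a + - b" by transfer (simp add: fa_sub_add)
  show "(a + b) * c = a * c + b * c" by transfer (simp add: fa_mul_add_left)
  show "a * (b + c) = a * b + a * c" by transfer (simp add: fa_mul_add_right)
  show "(0::U) \<noteq> 1"
  proof transfer
    show "\<not> rel_eq (\<lambda>_. 0) (fa_word [])"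
    proof
      assume "rel_eq (\<lambda>_. 0) (fa_word [])"
      then have "fa_sub (\<lambda>_. 0) (fa_word []) [] = 0" by (simp add: rel_eq_def rel_ideal_nil)
      then show False by (simp add: fa_sub_def fa_word_def)
    qed
  qed
qed
end

abbreviation cls :: "fa \<Rightarrow> U" where "cls \<equiv> abs_U"

lemma cls_eq_iff: "p \<in> FA \<Longrightarrow> q \<in> FA \<Longrightarrow> cls p = cls q \<longleftrightarrow> fa_sub p q \<in> rel_ideal"
  using Quotient3_rel[OF Quotient3_U, of p q] by (auto simp: rel_eq_def)

lemma cls_add: "p \<in> FA \<Longrightarrow> q \<in> FA \<Longrightarrow> cls (fa_add p q) = cls p + cls q"
  by (simp add: plus_U.abs_eq)
lemma cls_sub: "p \<in> FA \<Longrightarrow> q \<in> FA \<Longrightarrow> cls (fa_sub p q) = cls p - cls q"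
  by (simp add: minus_U.abs_eq)
lemma cls_mul: "p \<in> FA \<Longrightarrow> q \<in> FA \<Longrightarrow> cls (fa_mul p q) = cls p * cls q"
  by (simp add: times_U.abs_eq)
lemma cls_zero: "cls (\<lambda>_. 0) = 0" by (simp add: zero_U.abs_eq)
lemma cls_one: "cls (fa_word []) = 1" by (simp add: one_U.abs_eq)

definition scal :: "complex \<Rightarrow> U" where "scal c = cls (fa_const c)"

lemma fa_smul_as_mul: "fa_smul c p = fa_mul (fa_const c) p"
  by (simp add: fa_const_def fa_mul_smul_left)
lemma fa_smul_as_mul': "fa_smul c p = fa_mul p (fa_const c)"
  by (simp add: fa_const_def fa_mul_smul_right)

lemma cls_smul: "p \<in> FA \<Longrightarrow> cls (fa_smul c p) = scal c * cls p"
  by (simp add: fa_smul_as_mul cls_mul scal_def)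

lemma scal_comm: "scal c * X = X * scal c"
proof (induction X rule: U.abs_induct)
  case (1 y)
  then have "y \<in> FA" by simp
  then show ?case
    by (simp add: scal_def cls_mul[symmetric] fa_smul_as_mul[symmetric] fa_smul_as_mul'[symmetric])
qed

lemma scal_comm_left: "X * (scal c * Z) = scal c * (X * Z)"
  by (metis mult.assoc scal_comm)

lemma fa_const_add: "fa_const (a + b) = fa_add (fa_const a) (fa_const b)"
  by (simp add: fa_const_def fa_smul_def fa_add_def fun_eq_iff distrib_right)
lemma fa_const_mul: "fa_const (a * b) = fa_mul (fa_const a) (fa_const b)"
  by (simp only: fa_const_def fa_mul_smul_left fa_mul_smul_right fa_mul_one_left) (simp add: fa_smul_def fun_eq_iff)

lemma scal_add: "scal (a + b) = scal a + scal b" by (simp add: scal_def fa_const_add cls_add)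
lemma scal_mult: "scal (a * b) = scal a * scal b" by (simp add: scal_def fa_const_mul cls_mul)
lemma scal_one[simp]: "scal 1 = 1"
  by (simp add: scal_def fa_const_def fa_smul_def cls_one[symmetric])
lemma scal_zero[simp]: "scal 0 = 0"
  by (simp add: scal_def fa_const_def fa_smul_def cls_zero[symmetric])
lemma scal_minus: "scal (- a) = - scal a"
  by (metis add.right_neutral add_diff_cancel_left' diff_add_cancel scal_add scal_zero add_uminus_conv_diff)
lemma scal_diff: "scal (a - b) = scal a - scal b"
  by (metis diff_conv_add_uminus scal_add scal_minus)
lemma scal_of_nat: "scal (of_nat n) = of_nat n"
  by (induction n) (simp_all add: scal_add)

lemma cls_sum: "finite A \<Longrightarrow> (\<And>i. i \<in> A \<Longrightarrow> f i \<in> FA) \<Longrightarrow> cls (\<lambda>v. \<Sum>i\<in>A. f i v) = (\<Sum>i\<in>A. cls (f i))"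
proof (induction A rule: finite_induct)
  case empty then show ?case by (simp add: cls_zero)
next
  case (insert x F)
  have "(\<lambda>v. \<Sum>i\<in>insert x F. f i v) = fa_add (f x) (\<lambda>v. \<Sum>i\<in>F. f i v)"
    using insert by (simp add: fa_add_def)
  moreover have "(\<lambda>v. \<Sum>i\<in>F. f i v) \<in> FA" using insert by (intro FA_sum) auto
  ultimately show ?case using insert by (simp add: cls_add)
qed

definition ugen :: "gen \<Rightarrow> U" where "ugen g = cls (fa_word [g])"

lemma cls_word: "cls (fa_word w) = prod_list (map ugen w)"
proof (induction w)
  case Nil then show ?case by (simp add: cls_one)
next
  case (Cons a w)
  have "fa_word (a # w) = fa_mul (fa_word [a]) (fa_word w)" by (simp add: fa_mul_word)
  then show ?case using Cons by (simp add: cls_mul ugen_def)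
qed

lemma cls_replicate: "cls (fa_word (replicate n g)) = ugen g ^ n"
  by (simp add: cls_word prod_list_replicate)

lemma cls_urel: "cls (urel x y) = 0"
proof -
  have "fa_mul (fa_mul (fa_word []) (urel x y)) (fa_word []) \<in> rel_ideal" by (rule ir_rel) simp_all
  then have "urel x y \<in> rel_ideal" by simp
  then show ?thesis using cls_eq_iff[of "urel x y" "\<lambda>_. 0"] rel_ideal_FA
    by (simp add: cls_zero fa_sub_def)
qed

lemma bracket: "ugen x * ugen y - ugen y * ugen x = (\<Sum>g\<in>allgens. scal (coord (mbracket x y) g) * ugen g)"
proof -
  have "cls (\<lambda>w. \<Sum>g\<in>allgens. fa_smul (coord (mbracket x y) g) (fa_word [g]) w)
      = (\<Sum>g\<in>allgens. scal (coord (mbracket x y) g) * ugen g)"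
    by (subst cls_sum) (auto simp: allgens_def cls_smul ugen_def)
  then have "0 = ugen x * ugen y - ugen y * ugen x - (\<Sum>g\<in>allgens. scal (coord (mbracket x y) g) * ugen g)"
    using cls_urel[of x y] by (simp add: urel_eq FA_bracket_sum cls_sub cls_word)
  then show ?thesis by (simp add: algebra_simps)
qed

lemma allgens_sum: "(\<Sum>g\<in>allgens. f g) = f E12 + f E13 + f E21 + f E23 + f E31 + f E32 + f H1 + f H2"
  by (simp add: allgens_def add.assoc)

lemmas bracket_expanded = bracket[unfolded allgens_sum, simplified mbracket_def matmul_def unitm_def]

lemma lessThan_3: "{..<(3::nat)} = {0,1,2}" by auto

lemma scal_numeral[simp]: "scal (numeral n) = numeral n"
  using scal_of_nat[of "numeral n"] by simp
lemma scal_neg_numeral[simp]: "scal (- numeral n) = - numeral n"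
  by (simp add: scal_minus)
lemma scal_neg_one[simp]: "scal (- 1) = - 1"
  by (simp add: scal_minus)

abbreviation "N1 \<equiv> ugen E21"
abbreviation "N2 \<equiv> ugen E32"
abbreviation "N3 \<equiv> ugen E31"
abbreviation "X12 \<equiv> ugen E12"
abbreviation "X23 \<equiv> ugen E23"
abbreviation "X13 \<equiv> ugen E13"
abbreviation "Y1 \<equiv> ugen H1"
abbreviation "Y2 \<equiv> ugen H2"

lemma N2_N1_comm: "N2 * N1 = N1 * N2 + N3"
  using bracket_expanded[of E32 E21] by (simp add: lessThan_3 unitm_def algebra_simps)
lemma N3_N1_comm: "N3 * N1 = N1 * N3"
  using bracket_expanded[of E31 E21] by (simp add: lessThan_3 unitm_def algebra_simps)
lemma N3_N2_comm: "N3 * N2 = N2 * N3"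
  using bracket_expanded[of E31 E32] by (simp add: lessThan_3 unitm_def algebra_simps)
lemma X12_N1_comm: "X12 * N1 = N1 * X12 + Y1"
  using bracket_expanded[of E12 E21] by (simp add: lessThan_3 unitm_def algebra_simps)
lemma X12_N2_comm: "X12 * N2 = N2 * X12"
  using bracket_expanded[of E12 E32] by (simp add: lessThan_3 unitm_def algebra_simps)
lemma X12_N3_comm: "X12 * N3 = N3 * X12 - N2"
  using bracket_expanded[of E12 E31] by (simp add: lessThan_3 unitm_def algebra_simps)
lemma X23_N1_comm: "X23 * N1 = N1 * X23"
  using bracket_expanded[of E23 E21] by (simp add: lessThan_3 unitm_def algebra_simps)
lemma X23_N2_comm: "X23 * N2 = N2 * X23 + Y2"
  using bracket_expanded[of E23 E32] by (simp add: lessThan_3 unitm_def algebra_simps)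
lemma X23_N3_comm: "X23 * N3 = N3 * X23 + N1"
  using bracket_expanded[of E23 E31] by (simp add: lessThan_3 unitm_def algebra_simps)
lemma X12_X23_comm: "X12 * X23 = X23 * X12 + X13"
  using bracket_expanded[of E12 E23] by (simp add: lessThan_3 unitm_def algebra_simps)
lemma Y1_N1_comm: "Y1 * N1 = N1 * Y1 - 2 * N1"
  using bracket_expanded[of H1 E21] by (simp add: lessThan_3 unitm_def algebra_simps)
lemma Y1_N2_comm: "Y1 * N2 = N2 * Y1 + N2"
  using bracket_expanded[of H1 E32] by (simp add: lessThan_3 unitm_def algebra_simps)
lemma Y1_N3_comm: "Y1 * N3 = N3 * Y1 - N3"
  using bracket_expanded[of H1 E31] by (simp add: lessThan_3 unitm_def algebra_simps)
lemma Y2_N1_comm: "Y2 * N1 = N1 * Y2 + N1"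
  using bracket_expanded[of H2 E21] by (simp add: lessThan_3 unitm_def algebra_simps)
lemma Y2_N2_comm: "Y2 * N2 = N2 * Y2 - 2 * N2"
  using bracket_expanded[of H2 E32] by (simp add: lessThan_3 unitm_def algebra_simps)
lemma Y2_N3_comm: "Y2 * N3 = N3 * Y2 - N3"
  using bracket_expanded[of H2 E31] by (simp add: lessThan_3 unitm_def algebra_simps)


section \<open>PBW normal forms\<close>

definition pbw :: "nat \<Rightarrow> nat \<Rightarrow> nat \<Rightarrow> U" where
  "pbw a b c = N1 ^ a * N2 ^ b * N3 ^ c"

lemma N1_pbw: "N1 * pbw a b c = pbw (Suc a) b c"
  by (simp add: pbw_def mult.assoc)

lemma N3_N1_pow_comm: "N3 * N1 ^ a = N1 ^ a * N3"
  by (rule power_commuting_commutes[OF N3_N1_comm[symmetric], symmetric])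
lemma N3_N2_pow_comm: "N3 * N2 ^ a = N2 ^ a * N3"
  by (rule power_commuting_commutes[OF N3_N2_comm[symmetric], symmetric])

lemma N3_pbw: "N3 * pbw a b c = pbw a b (Suc c)"
proof -
  have "N3 * pbw a b c = N1 ^ a * (N3 * N2 ^ b) * N3 ^ c"
    by (simp add: pbw_def N3_N1_pow_comm flip: mult.assoc)
  also have "\<dots> = pbw a b (Suc c)" by (simp add: N3_N2_pow_comm pbw_def mult.assoc)
  finally show ?thesis .
qed

lemma N2_N1_pow: "N2 * N1 ^ a = N1 ^ a * N2 + of_nat a * N1 ^ (a - 1) * N3"
proof (induction a)
  case 0 then show ?case by simp
next
  case (Suc a)
  have "N2 * N1 ^ Suc a = (N2 * N1 ^ a) * N1" by (simp add: power_commutes mult.assoc)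
  also have "\<dots> = N1 ^ a * (N2 * N1) + of_nat a * N1 ^ (a - 1) * (N3 * N1)"
    using Suc by (simp add: algebra_simps)
  also have "\<dots> = N1 ^ Suc a * N2 + N1 ^ a * N3 + of_nat a * N1 ^ (a - 1) * N1 * N3"
    by (simp add: N2_N1_comm N3_N1_comm distrib_left distrib_right power_commutes flip: mult.assoc)
  also have "of_nat a * N1 ^ (a - 1) * N1 = of_nat a * N1 ^ a"
    by (cases a) (simp_all add: power_commutes mult.assoc)
  finally show ?case by (simp add: algebra_simps)
qed

lemma N2_pbw: "N2 * pbw a b c = pbw a (Suc b) c + of_nat a * pbw (a - 1) b (Suc c)"
proof -
  have "N2 * pbw a b c = (N1 ^ a * N2 + of_nat a * N1 ^ (a - 1) * N3) * N2 ^ b * N3 ^ c"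
    by (simp add: pbw_def N2_N1_pow flip: mult.assoc)
  also have "\<dots> = pbw a (Suc b) c + of_nat a * N1 ^ (a - 1) * (N3 * N2 ^ b) * N3 ^ c"
    by (simp add: pbw_def algebra_simps)
  also have "\<dots> = pbw a (Suc b) c + of_nat a * pbw (a - 1) b (Suc c)"
    by (simp add: N3_N2_pow_comm pbw_def mult.assoc)
  finally show ?thesis .
qed

lemma pbw_N2: "pbw a b c * N2 = pbw a (Suc b) c"
proof -
  have "N3 ^ c * N2 = N2 * N3 ^ c" by (rule power_commuting_commutes[OF N3_N2_comm])
  moreover have "N2 ^ b * N2 = N2 ^ Suc b" by (simp add: power_commutes)
  ultimately show ?thesis by (metis pbw_def mult.assoc)
qed

(* The PBW monomials spanning the weight space of U(n_-) of weight -(A \<alpha> + B \<beta>). *)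
definition pbw_sum :: "nat \<Rightarrow> nat \<Rightarrow> (nat \<Rightarrow> complex) \<Rightarrow> U" where
  "pbw_sum A B g = (\<Sum>z\<le>min A B. scal (g z) * pbw (A - z) (B - z) z)"

lemma pbw_sum_ext: "min A B \<le> K \<Longrightarrow>
   pbw_sum A B g = (\<Sum>z\<le>K. scal (if z \<le> min A B then g z else 0) * pbw (A - z) (B - z) z)"
  unfolding pbw_sum_def by (rule sum.mono_neutral_cong_left) auto

lemma pbw_sum_cong: "(\<And>z. z \<le> min A B \<Longrightarrow> g z = h z) \<Longrightarrow> pbw_sum A B g = pbw_sum A B h"
  unfolding pbw_sum_def by (rule sum.cong) auto

lemma pbw_sum_scale: "scal x * pbw_sum A B g = pbw_sum A B (\<lambda>z. x * g z)"
  by (simp add: pbw_sum_def sum_distrib_left scal_mult mult.assoc)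
lemma pbw_sum_add: "pbw_sum A B g + pbw_sum A B h = pbw_sum A B (\<lambda>z. g z + h z)"
  by (simp add: pbw_sum_def sum.distrib[symmetric] scal_add distrib_right)
lemma pbw_sum_zero: "pbw_sum A B (\<lambda>_. 0) = 0"
  by (simp add: pbw_sum_def)

lemma N1_pbw_sum: "N1 * pbw_sum A B g = pbw_sum (Suc A) B (\<lambda>z. if z \<le> A then g z else 0)"
proof -
  have "N1 * pbw_sum A B g = (\<Sum>z\<le>min A B. scal (g z) * pbw (Suc A - z) (B - z) z)"
    unfolding pbw_sum_def sum_distrib_left
    by (rule sum.cong) (auto simp: scal_comm_left N1_pbw Suc_diff_le)
  also have "\<dots> = (\<Sum>z\<le>min (Suc A) B. scal (if z \<le> min A B then g z else 0) * pbw (Suc A - z) (B - z) z)"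
    by (rule sum.mono_neutral_cong_left) auto
  also have "\<dots> = pbw_sum (Suc A) B (\<lambda>z. if z \<le> A then g z else 0)"
    unfolding pbw_sum_def by (rule sum.cong) auto
  finally show ?thesis .
qed

lemma N3_pbw_sum: "N3 * pbw_sum A B g = pbw_sum (Suc A) (Suc B) (\<lambda>z. if z = 0 then 0 else g (z - 1))"
proof -
  have "N3 * pbw_sum A B g = (\<Sum>z\<le>min A B. scal (g z) * pbw (Suc A - Suc z) (Suc B - Suc z) (Suc z))"
    unfolding pbw_sum_def sum_distrib_left
    by (rule sum.cong) (auto simp: scal_comm_left N3_pbw)
  also have "\<dots> = pbw_sum (Suc A) (Suc B) (\<lambda>z. if z = 0 then 0 else g (z - 1))"
    unfolding pbw_sum_def min_Suc_Suc sum.atMost_Suc_shift by simp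
  finally show ?thesis .
qed

lemma pbw_sum_N2: "pbw_sum A B g * N2 = pbw_sum A (Suc B) (\<lambda>z. if z \<le> B then g z else 0)"
proof -
  have "pbw_sum A B g * N2 = (\<Sum>z\<le>min A B. scal (g z) * pbw (A - z) (Suc B - z) z)"
    unfolding pbw_sum_def sum_distrib_right
    by (rule sum.cong) (auto simp: mult.assoc pbw_N2 Suc_diff_le)
  also have "\<dots> = (\<Sum>z\<le>min A (Suc B). scal (if z \<le> min A B then g z else 0) * pbw (A - z) (Suc B - z) z)"
    by (rule sum.mono_neutral_cong_left) auto
  also have "\<dots> = pbw_sum A (Suc B) (\<lambda>z. if z \<le> B then g z else 0)"
    unfolding pbw_sum_def by (rule sum.cong) auto
  finally show ?thesis .
qed

lemma N2_scal_pbw: "z \<le> B \<Longrightarrow> N2 * (scal c * pbw (A - z) (B - z) z) =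
    scal c * pbw (A - z) (Suc B - z) z + scal (c * of_nat (A - z)) * pbw (A - Suc z) (Suc B - Suc z) (Suc z)"
  using N2_pbw[of "A - z" "B - z" z]
  by (simp add: scal_comm_left Suc_diff_le distrib_left scal_mult scal_of_nat mult.assoc)

lemma N2_pbw_sum: "N2 * pbw_sum A B g = pbw_sum A (Suc B)
   (\<lambda>z. (if z \<le> B then g z else 0) + (if 0 < z then of_nat (Suc A - z) * g (z - 1) else 0))"
proof -
  let ?m = "min A B" and ?m' = "min A (Suc B)"
  have "N2 * pbw_sum A B g = (\<Sum>z\<le>?m. scal (g z) * pbw (A - z) (Suc B - z) z)
     + (\<Sum>z\<le>?m. scal (g z * of_nat (A - z)) * pbw (A - Suc z) (Suc B - Suc z) (Suc z))"
    unfolding pbw_sum_def sum_distrib_left sum.distrib[symmetric]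
    by (rule sum.cong) (simp_all add: N2_scal_pbw)
  also have "(\<Sum>z\<le>?m. scal (g z) * pbw (A - z) (Suc B - z) z)
      = (\<Sum>z\<le>Suc ?m. scal (if z \<le> ?m' \<and> z \<le> B then g z else 0) * pbw (A - z) (Suc B - z) z)"
    by (rule sum.mono_neutral_cong_left) auto
  also have "(\<Sum>z\<le>?m. scal (g z * of_nat (A - z)) * pbw (A - Suc z) (Suc B - Suc z) (Suc z))
      = (\<Sum>z\<le>Suc ?m. scal (if z \<le> ?m' \<and> 0 < z then of_nat (Suc A - z) * g (z - 1) else 0) * pbw (A - z) (Suc B - z) z)"
  proof -
    have "scal (g z * of_nat (A - z)) * pbw (A - Suc z) (Suc B - Suc z) (Suc z) =
        scal (if Suc z \<le> ?m' \<and> 0 < Suc z then of_nat (Suc A - Suc z) * g (Suc z - 1) else 0)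
        * pbw (A - Suc z) (Suc B - Suc z) (Suc z)" if "z \<le> ?m" for z
      using that by (cases "z = A") (auto simp: mult.commute)
    then show ?thesis
      unfolding sum.atMost_Suc_shift by simp
  qed
  also have "(\<Sum>z\<le>Suc ?m. scal (if z \<le> ?m' \<and> z \<le> B then g z else 0) * pbw (A - z) (Suc B - z) z)
     + (\<Sum>z\<le>Suc ?m. scal (if z \<le> ?m' \<and> 0 < z then of_nat (Suc A - z) * g (z - 1) else 0) * pbw (A - z) (Suc B - z) z)
     = (\<Sum>z\<le>Suc ?m. scal (if z \<le> ?m' then (if z \<le> B then g z else 0) + (if 0 < z then of_nat (Suc A - z) * g (z - 1) else 0) else 0) * pbw (A - z) (Suc B - z) z)"
    unfolding sum.distrib[symmetric] by (rule sum.cong) (simp_all add: scal_add distrib_right)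
  also have "\<dots> = pbw_sum A (Suc B) (\<lambda>z. (if z \<le> B then g z else 0) + (if 0 < z then of_nat (Suc A - z) * g (z - 1) else 0))"
    by (rule pbw_sum_ext[symmetric]) simp
  finally show ?thesis .
qed


lemma ffall_0[simp]: "ffall x 0 = 1" by (simp add: ffall_def)
lemma ffall_Suc: "ffall x (Suc j) = ffall x j * (x - of_nat j)"
  by (simp add: ffall_def)
lemma ffall_Suc_shift: "ffall x (Suc j) = x * ffall (x - 1) j"
proof (induction j)
  case 0 then show ?case by (simp add: ffall_def)
next
  case (Suc j)
  then show ?case by (simp add: ffall_Suc algebra_simps)
qed

lemma ffall_nat_zero: "m < j \<Longrightarrow> ffall (of_nat m) j = 0"
proof (induction j)
  case 0 then show ?case by simp
next
  case (Suc j)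
  then show ?case
    by (cases "m = j") (simp_all add: ffall_Suc)
qed

lemma ffall_add: "ffall x (m + n) = ffall x m * ffall (x - of_nat m) n"
proof (induction n)
  case 0 then show ?case by simp
next
  case (Suc n)
  then show ?case by (simp add: ffall_Suc algebra_simps)
qed

lemma ffall_pascal: "ffall (x + 1) (Suc j) = ffall x (Suc j) + of_nat (Suc j) * ffall x j"
proof (induction j arbitrary: x)
  case 0 then show ?case by (simp add: ffall_def)
next
  case (Suc j)
  have "ffall (x + 1) (Suc (Suc j)) = (x + 1) * ffall x (Suc j)"
    by (simp add: ffall_Suc_shift)
  also have "\<dots> = (x + 1) * (ffall (x - 1) (Suc j) + of_nat (Suc j) * ffall (x - 1) j)"
    using Suc[of "x - 1"] by simp
  also have "\<dots> = x * ffall (x - 1) (Suc j) + ffall (x - 1) (Suc j) + of_nat (Suc j) * (x * ffall (x - 1) j + ffall (x - 1) j)"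
    by (simp add: algebra_simps)
  also have "x * ffall (x - 1) (Suc j) = ffall x (Suc (Suc j))" by (simp add: ffall_Suc_shift)
  also have "x * ffall (x - 1) j = ffall x (Suc j)" by (simp add: ffall_Suc_shift)
  also have "ffall (x - 1) (Suc j) = ffall (x - 1) j * (x - 1 - of_nat j)" by (simp add: ffall_Suc)
  also have "ffall x (Suc j) = x * ffall (x - 1) j" by (simp add: ffall_Suc_shift)
  finally show ?case by (simp add: ffall_Suc_shift algebra_simps)
qed

lemma ffall_pred: "of_nat a * ffall (of_nat (a - 1)) j = ffall (of_nat a) j * (of_nat a - of_nat j :: complex)"
proof (cases a)
  case 0 then show ?thesis by (cases j) (simp_all add: ffall_Suc_shift)
next
  case (Suc a')
  then have "of_nat a * ffall (of_nat (a - 1)) j = ffall (of_nat a :: complex) (Suc j)"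
    by (simp add: ffall_Suc_shift)
  then show ?thesis by (simp add: ffall_Suc)
qed

lemma ffall_pred_Suc: "of_nat b * ffall (of_nat (b - 1)) i = ffall (of_nat b :: complex) (Suc i)"
proof (cases b)
  case 0 then show ?thesis by (simp add: ffall_Suc_shift)
next
  case (Suc b') then show ?thesis by (simp add: ffall_Suc_shift)
qed

lemma ffall_trunc: "of_nat (Suc a - Suc i) * ffall (of_nat a) i = ffall (of_nat a :: complex) (Suc i)"
proof (cases "i \<le> a")
  case True then show ?thesis by (simp add: ffall_Suc of_nat_diff mult.commute)
next
  case False then show ?thesis by (simp add: ffall_nat_zero)
qed

lemma ffall_fact: "m \<le> n \<Longrightarrow> ffall (of_nat n) m * fact (n - m) = (fact n :: complex)"
proof (induction m)
  case 0 then show ?case by simp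
next
  case (Suc m)
  then have "n - m = Suc (n - Suc m)" by simp
  then have f: "(fact (n - m) :: complex) = of_nat (n - m) * fact (n - Suc m)" by simp
  have "ffall (of_nat n) (Suc m) * fact (n - Suc m) = ffall (of_nat n) m * (of_nat n - of_nat m) * fact (n - Suc m)"
    by (simp add: ffall_Suc)
  also have "\<dots> = ffall (of_nat n) m * fact (n - m)" using Suc.prems by (simp add: f of_nat_diff mult.assoc)
  finally show ?case using Suc by simp
qed

lemma choose_ffall: "of_nat (n choose m) * fact m = ffall (of_nat n :: complex) m"
proof (cases "m \<le> n")
  case True
  have "fact m * fact (n - m) * (n choose m) = fact n" using binomial_fact_lemma[OF True] .
  then have "(fact m * fact (n - m) * of_nat (n choose m) :: complex) = fact n"
    by (metis of_nat_fact of_nat_mult)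
  then have "(of_nat (n choose m) * fact m) * fact (n - m) = ffall (of_nat n :: complex) m * fact (n - m)"
    using ffall_fact[OF True] by (simp add: mult_ac)
  then show ?thesis by simp
next
  case False then show ?thesis by (simp add: ffall_nat_zero)
qed

lemma ffall_sub_mult: "m \<le> n \<Longrightarrow> ffall x m * ffall (x - of_nat m) (n - m) = ffall x n"
  using ffall_add[of x m "n - m"] by simp

lemma choose_mult_ffall: "m \<le> z \<Longrightarrow>
   of_nat (n choose m) * ffall (of_nat n - of_nat m) (z - m) = ffall (of_nat n :: complex) z / fact m"
proof -
  assume mz: "m \<le> z"
  have "of_nat (n choose m) = ffall (of_nat n :: complex) m / fact m"
    using choose_ffall[of n m] by (simp add: field_simps)
  then show ?thesis using ffall_sub_mult[OF mz, of "of_nat n"] by simp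
qed

lemma ffall_eq_pochhammer: "ffall x j = pochhammer (x - of_nat j + 1) j"
proof (induction j)
  case 0 then show ?case by simp
next
  case (Suc j)
  have "ffall x (Suc j) = (x - of_nat j) * pochhammer (x - of_nat j + 1) j"
    by (simp add: ffall_Suc Suc mult.commute)
  also have "\<dots> = pochhammer (x - of_nat (Suc j) + 1) (Suc j)"
    by (simp add: pochhammer_rec)
  finally show ?case .
qed

lemma pochhammer_ffall_convolution:
  "(\<Sum>r\<le>Z. of_nat (Z choose r) * pochhammer v r * ffall (N - of_nat r) (Z - r)) = ffall (N + v :: complex) Z"
proof -
  have "(\<Sum>r\<le>Z. of_nat (Z choose r) * pochhammer v r * ffall (N - of_nat r) (Z - r))
      = (\<Sum>r\<le>Z. of_nat (Z choose r) * pochhammer v r * pochhammer (N - of_nat Z + 1) (Z - r))"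
    by (intro sum.cong) (simp_all add: ffall_eq_pochhammer of_nat_diff)
  also have "\<dots> = pochhammer (v + (N - of_nat Z + 1)) Z"
    by (rule pochhammer_binomial_sum[symmetric])
  also have "\<dots> = ffall (N + v) Z"
    by (simp add: ffall_eq_pochhammer algebra_simps)
  finally show ?thesis .
qed

lemma Cay_convolution_row:
  assumes iz: "i \<le> z"
  shows "(\<Sum>r\<le>z - i. of_nat (z choose (i + r)) * of_nat ((i + r) choose i) * ffall u i * pochhammer v r
      * ffall (N - of_nat (i + r)) (z - (i + r))) = of_nat (z choose i) * ffall u i * ffall (N + v - of_nat i) (z - i)"
proof -
  have "(\<Sum>r\<le>z - i. of_nat (z choose (i + r)) * of_nat ((i + r) choose i) * ffall u i * pochhammer v r
      * ffall (N - of_nat (i + r)) (z - (i + r)))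
      = (\<Sum>r\<le>z - i. of_nat (z choose i) * ffall u i *
        (of_nat ((z - i) choose r) * pochhammer v r * ffall ((N - of_nat i) - of_nat r) ((z - i) - r)))"
  proof (rule sum.cong)
    fix r assume "r \<in> {..z - i}"
    then have "(z choose (i + r)) * ((i + r) choose i) = (z choose i) * ((z - i) choose r)"
      using iz choose_mult[of i "i + r" z] by simp
    then have "of_nat (z choose (i + r)) * of_nat ((i + r) choose i) = (of_nat (z choose i) * of_nat ((z - i) choose r) :: complex)"
      by (metis of_nat_mult)
    then show "of_nat (z choose (i + r)) * of_nat ((i + r) choose i) * ffall u i * pochhammer v r
        * ffall (N - of_nat (i + r)) (z - (i + r)) = of_nat (z choose i) * ffall u i *
        (of_nat ((z - i) choose r) * pochhammer v r * ffall ((N - of_nat i) - of_nat r) ((z - i) - r))"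
      by (simp add: algebra_simps)
  qed simp
  also have "\<dots> = of_nat (z choose i) * ffall u i * ffall (N - of_nat i + v) (z - i)"
    by (simp only: sum_distrib_left[symmetric] pochhammer_ffall_convolution)
  finally show ?thesis by (simp add: algebra_simps)
qed

lemma Cay_ffall_convolution: "(\<Sum>m\<le>z. of_nat (z choose m) * Cay m x (of_nat n) * ffall (of_nat n - of_nat m) (z - m))
   = 2 ^ z * ffall ((x + of_nat n) / 2) z"
proof -
  define u where "u = (x + of_nat n) / 2"
  define v where "v = (x - of_nat n) / 2"
  define g where "g i r = of_nat (z choose (i + r)) * of_nat ((i + r) choose i) * ffall u i * pochhammer v r
       * ffall (of_nat n - of_nat (i + r)) (z - (i + r))" for i r
  have "(\<Sum>m\<le>z. of_nat (z choose m) * Cay m x (of_nat n) * ffall (of_nat n - of_nat m) (z - m))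
      = (\<Sum>m\<le>z. \<Sum>i\<le>m. g i (m - i))"
    unfolding Cay_def u_def[symmetric] v_def[symmetric] g_def
    by (rule sum.cong) (auto simp: sum_distrib_left sum_distrib_right mult_ac intro!: sum.cong)
  also have "\<dots> = (\<Sum>(i, r)\<in>{(i, r). i + r \<le> z}. g i r)"
    by (rule sum.triangle_reindex_eq[symmetric])
  also have "{(i, r). i + r \<le> z} = Sigma {..z} (\<lambda>i. {..z - i})" by auto
  also have "(\<Sum>(i, r)\<in>Sigma {..z} (\<lambda>i. {..z - i}). g i r) = (\<Sum>i\<le>z. \<Sum>r\<le>z - i. g i r)"
    by (rule sum.Sigma[symmetric]) auto
  also have "\<dots> = (\<Sum>i\<le>z. of_nat (z choose i) * ffall u z)"
  proof (rule sum.cong)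
    fix i assume "i \<in> {..z}"
    then have iz: "i \<le> z" by simp
    have "of_nat n + v - of_nat i = u - of_nat i" by (simp add: u_def v_def field_simps)
    then show "(\<Sum>r\<le>z - i. g i r) = of_nat (z choose i) * ffall u z"
      unfolding g_def Cay_convolution_row[OF iz] using ffall_sub_mult[OF iz, of u] by (simp add: mult.assoc)
  qed simp
  also have "\<dots> = 2 ^ z * ffall u z"
    by (simp add: sum_distrib_right[symmetric] flip: of_nat_sum) (simp add: choose_row_sum)
  finally show ?thesis by (simp add: u_def)
qed

lemma inv_fact_choose: "m \<le> z \<Longrightarrow> 1 / (fact m * fact (z - m)) = (of_nat (z choose m) / fact z :: complex)"
proof -
  assume "m \<le> z"
  then have "fact m * fact (z - m) * (z choose m) = fact z" by (rule binomial_fact_lemma)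
  then have "(fact m * fact (z - m) * of_nat (z choose m) :: complex) = fact z" by (metis of_nat_fact of_nat_mult)
  then show ?thesis by (simp add: field_simps)
qed

lemma ffall_zero_left: "ffall 0 z = 0 ^ z"
  by (cases z) (simp_all add: ffall_Suc_shift)


section \<open>Symmetrised monomials\<close>

definition orderings_mset :: "nat \<Rightarrow> nat \<Rightarrow> nat \<Rightarrow> gen multiset" where
  "orderings_mset a b c = replicate_mset a E21 + replicate_mset b E32 + replicate_mset c E31"

lemma orderings_eq_permutations_of_multiset:
  "orderings a b c = permutations_of_multiset (orderings_mset a b c)"
proof (intro set_eqI iffI)
  fix w assume "w \<in> orderings a b c"
  then have "count (mset w) g = count (orderings_mset a b c) g" for g
    by (cases g) (auto simp: orderings_def orderings_mset_def count_mset count_list_0_iff)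
  then show "w \<in> permutations_of_multiset (orderings_mset a b c)"
    by (intro permutations_of_multisetI multiset_eqI)
next
  fix w assume "w \<in> permutations_of_multiset (orderings_mset a b c)"
  then have w: "mset w = orderings_mset a b c" by (rule permutations_of_multisetD)
  have "set w = set_mset (orderings_mset a b c)"
    by (simp flip: w)
  also have "\<dots> \<subseteq> {E21, E32, E31}"
    by (auto simp: orderings_mset_def)
  finally have "set w \<subseteq> {E21, E32, E31}" .
  with w show "w \<in> orderings a b c"
    by (auto simp: orderings_def orderings_mset_def simp flip: count_mset)
qed

lemma finite_orderings[simp]: "finite (orderings a b c)"
  by (simp add: orderings_eq_permutations_of_multiset)

lemma orderings_not_empty[simp]: "orderings a b c \<noteq> {}"
  by (simp add: orderings_eq_permutations_of_multiset)

lemma card_orderings_pos: "0 < card (orderings a b c)"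
  by (simp add: card_gt_0_iff)

lemma orderings_nil: "orderings 0 0 0 = {[]}"
  by (simp add: orderings_eq_permutations_of_multiset orderings_mset_def)

lemma card_permutations_of_multiset_ratio:
  assumes "x \<in># A"
  shows "of_nat (card (permutations_of_multiset (A - {#x#}))) / of_nat (card (permutations_of_multiset A))
    = (of_nat (count A x) / of_nat (size A) :: 'a::field_char_0)"
proof -
  have "card (permutations_of_multiset A) \<noteq> 0" "size A \<noteq> 0"
    using assms by (auto simp: card_gt_0_iff[symmetric] dest: multi_member_split)
  then show ?thesis
    using card_permutations_of_multiset_remove_aux[OF assms]
    by (simp add: field_simps flip: of_nat_mult)
qed

lemma card_orderings_ratio:
  "0 < a \<Longrightarrow> of_nat (card (orderings (a - 1) b c)) / of_nat (card (orderings a b c))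
     = (of_nat a / of_nat (a + b + c) :: complex)"
  "0 < b \<Longrightarrow> of_nat (card (orderings a (b - 1) c)) / of_nat (card (orderings a b c))
     = (of_nat b / of_nat (a + b + c) :: complex)"
  "0 < c \<Longrightarrow> of_nat (card (orderings a b (c - 1))) / of_nat (card (orderings a b c))
     = (of_nat c / of_nat (a + b + c) :: complex)"
  using card_permutations_of_multiset_ratio[of E21 "orderings_mset a b c"]
    card_permutations_of_multiset_ratio[of E32 "orderings_mset a b c"]
    card_permutations_of_multiset_ratio[of E31 "orderings_mset a b c"]
  by (auto simp: orderings_eq_permutations_of_multiset orderings_mset_def gr0_conv_Suc)

lemma Cons_in_orderings: "x # w \<in> orderings a b c \<longleftrightarrow>
   (x = E21 \<and> 0 < a \<and> w \<in> orderings (a - 1) b c) \<or>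
   (x = E32 \<and> 0 < b \<and> w \<in> orderings a (b - 1) c) \<or>
   (x = E31 \<and> 0 < c \<and> w \<in> orderings a b (c - 1))"
  by (auto simp: orderings_def)

definition orderings_N1_first :: "nat \<Rightarrow> nat \<Rightarrow> nat \<Rightarrow> gen list set" where
  "orderings_N1_first a b c = (if 0 < a then (Cons E21) ` orderings (a - 1) b c else {})"
definition orderings_N2_first :: "nat \<Rightarrow> nat \<Rightarrow> nat \<Rightarrow> gen list set" where
  "orderings_N2_first a b c = (if 0 < b then (Cons E32) ` orderings a (b - 1) c else {})"
definition orderings_N3_first :: "nat \<Rightarrow> nat \<Rightarrow> nat \<Rightarrow> gen list set" where
  "orderings_N3_first a b c = (if 0 < c then (Cons E31) ` orderings a b (c - 1) else {})"

lemma orderings_split: "0 < a + b + c \<Longrightarrow> orderings a b c = orderings_N1_first a b c \<union> orderings_N2_first a b c \<union> orderings_N3_first a b c"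
proof (rule set_eqI)
  fix w assume n: "0 < a + b + c"
  show "w \<in> orderings a b c \<longleftrightarrow> w \<in> orderings_N1_first a b c \<union> orderings_N2_first a b c \<union> orderings_N3_first a b c"
  proof (cases w)
    case Nil
    then show ?thesis using n by (auto simp: orderings_N1_first_def orderings_N2_first_def orderings_N3_first_def orderings_def)
  next
    case (Cons x v)
    then show ?thesis by (auto simp: Cons_in_orderings orderings_N1_first_def orderings_N2_first_def orderings_N3_first_def)
  qed
qed

lemma orderings_first_disjoint: "orderings_N1_first a b c \<inter> orderings_N2_first a b c = {}" "(orderings_N1_first a b c \<union> orderings_N2_first a b c) \<inter> orderings_N3_first a b c = {}"
  by (auto simp: orderings_N1_first_def orderings_N2_first_def orderings_N3_first_def)

lemma finite_orderings_first[simp]: "finite (orderings_N1_first a b c)" "finite (orderings_N2_first a b c)" "finite (orderings_N3_first a b c)"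
  by (auto simp: orderings_N1_first_def orderings_N2_first_def orderings_N3_first_def)

definition orderings_sum :: "nat \<Rightarrow> nat \<Rightarrow> nat \<Rightarrow> U" where
  "orderings_sum a b c = (\<Sum>w\<in>orderings a b c. prod_list (map ugen w))"

lemma FA_sym[simp]: "fa_sym a b c \<in> FA"
  by (rule FA_finite_support[of "orderings a b c"]) (auto simp: fa_sym_def)

lemma cls_fa_sym: "cls (fa_sym a b c) = scal (1 / of_nat (card (orderings a b c))) * orderings_sum a b c"
proof -
  have "fa_sym a b c = (\<lambda>v. \<Sum>w\<in>orderings a b c. fa_smul (1 / of_nat (card (orderings a b c))) (fa_word w) v)"
  proof (rule ext)
    fix v
    have h: "fa_smul k (fa_word w) v = (if w = v then k else 0)" for k w by (auto simp: fa_smul_def fa_word_def)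
    show "fa_sym a b c v = (\<Sum>w\<in>orderings a b c. fa_smul (1 / of_nat (card (orderings a b c))) (fa_word w) v)"
      unfolding h by (simp add: fa_sym_def sum.delta)
  qed
  then show ?thesis
    by (simp only: cls_sum[OF finite_orderings FA_smul[OF FA_word]] cls_smul[OF FA_word] cls_word
        orderings_sum_def sum_distrib_left)
qed

lemma sum_Cons_image: "(\<Sum>w\<in>Cons x ` W. prod_list (map ugen w)) = ugen x * (\<Sum>w\<in>W. prod_list (map ugen w))"
  by (simp add: sum.reindex sum_distrib_left)

lemma orderings_sum_rec: "0 < a + b + c \<Longrightarrow> orderings_sum a b c =
   (if 0 < a then N1 * orderings_sum (a - 1) b c else 0) +
   (if 0 < b then N2 * orderings_sum a (b - 1) c else 0) +
   (if 0 < c then N3 * orderings_sum a b (c - 1) else 0)"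
proof -
  assume n: "0 < a + b + c"
  have "orderings_sum a b c = (\<Sum>w\<in>orderings_N1_first a b c \<union> orderings_N2_first a b c \<union> orderings_N3_first a b c. prod_list (map ugen w))"
    unfolding orderings_sum_def using orderings_split[OF n] by simp
  also have "\<dots> = (\<Sum>w\<in>orderings_N1_first a b c \<union> orderings_N2_first a b c. prod_list (map ugen w)) + (\<Sum>w\<in>orderings_N3_first a b c. prod_list (map ugen w))"
    by (rule sum.union_disjoint) (simp_all add: orderings_first_disjoint)
  also have "(\<Sum>w\<in>orderings_N1_first a b c \<union> orderings_N2_first a b c. prod_list (map ugen w)) = (\<Sum>w\<in>orderings_N1_first a b c. prod_list (map ugen w)) + (\<Sum>w\<in>orderings_N2_first a b c. prod_list (map ugen w))"
    by (rule sum.union_disjoint) (simp_all add: orderings_first_disjoint)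
  finally show ?thesis
    by (simp add: orderings_N1_first_def orderings_N2_first_def orderings_N3_first_def sum_Cons_image orderings_sum_def)
qed

definition sym_mon :: "nat \<Rightarrow> nat \<Rightarrow> nat \<Rightarrow> U" where "sym_mon a b c = cls (fa_sym a b c)"

lemma sym_mon_rec: "0 < a + b + c \<Longrightarrow> sym_mon a b c =
    scal (of_nat a / of_nat (a + b + c)) * (N1 * sym_mon (a - 1) b c)
  + scal (of_nat b / of_nat (a + b + c)) * (N2 * sym_mon a (b - 1) c)
  + scal (of_nat c / of_nat (a + b + c)) * (N3 * sym_mon a b (c - 1))"
proof -
  assume n: "0 < a + b + c"
  let ?K = "\<lambda>a b c. of_nat (card (orderings a b c)) :: complex"
  have sym_mon_eq: "sym_mon a' b' c' = scal (1 / ?K a' b' c') * orderings_sum a' b' c'" for a' b' c'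
    by (simp add: sym_mon_def cls_fa_sym)
  have sum_eq: "orderings_sum a' b' c' = scal (?K a' b' c') * sym_mon a' b' c'" for a' b' c'
    using card_orderings_pos[of a' b' c'] by (simp add: sym_mon_eq flip: mult.assoc scal_mult)
  have step: "scal (1 / ?K a b c) * (if 0 < x then N * orderings_sum a' b' c' else 0)
      = scal (of_nat x / of_nat (a + b + c)) * (N * sym_mon a' b' c')"
    if ratio: "0 < x \<Longrightarrow> ?K a' b' c' / ?K a b c = of_nat x / of_nat (a + b + c)"
    for x N a' b' c'
  proof (cases "0 < x")
    case True
    have "scal (1 / ?K a b c) * (N * orderings_sum a' b' c')
        = scal (1 / ?K a b c) * scal (?K a' b' c') * (N * sym_mon a' b' c')"
      by (simp only: sum_eq scal_comm_left[of N] mult.assoc)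
    also have "\<dots> = scal (of_nat x / of_nat (a + b + c)) * (N * sym_mon a' b' c')"
      using ratio[OF True] by (simp flip: scal_mult)
    finally show ?thesis using True by simp
  qed simp
  have "sym_mon a b c = scal (1 / ?K a b c) * (if 0 < a then N1 * orderings_sum (a - 1) b c else 0)
      + scal (1 / ?K a b c) * (if 0 < b then N2 * orderings_sum a (b - 1) c else 0)
      + scal (1 / ?K a b c) * (if 0 < c then N3 * orderings_sum a b (c - 1) else 0)"
    unfolding sym_mon_eq[of a b c] orderings_sum_rec[OF n] by (simp only: distrib_left)
  then show ?thesis
    by (simp only: step card_orderings_ratio)
qed


section \<open>Normal form of symmetrised monomials\<close>

definition sym_coeff :: "nat \<Rightarrow> nat \<Rightarrow> nat \<Rightarrow> complex" where
  "sym_coeff a b j = ffall (of_nat a) j * ffall (of_nat b) j / (fact j * 2 ^ j)"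

definition sym_pbw_coeff :: "nat \<Rightarrow> nat \<Rightarrow> nat \<Rightarrow> nat \<Rightarrow> complex" where
  "sym_pbw_coeff a b c z = (if c \<le> z then sym_coeff a b (z - c) else 0)"

lemma sym_coeff_rec: "(of_nat a + of_nat b) * sym_coeff a b j = of_nat a * sym_coeff (a - 1) b j + of_nat b * sym_coeff a (b - 1) j
   + (if 0 < j then of_nat b * of_nat (Suc a - j) * sym_coeff a (b - 1) (j - 1) else 0)"
proof -
  have A: "of_nat a * sym_coeff (a - 1) b j = (of_nat a - of_nat j) * sym_coeff a b j"
  proof -
    have "of_nat a * sym_coeff (a - 1) b j = (of_nat a * ffall (of_nat (a - 1)) j) * ffall (of_nat b) j / (fact j * 2 ^ j)"
      unfolding sym_coeff_def by (simp only: times_divide_eq_right mult.assoc)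
    also have "\<dots> = (of_nat a - of_nat j) * sym_coeff a b j"
      unfolding ffall_pred sym_coeff_def by (simp add: mult_ac)
    finally show ?thesis .
  qed
  have B: "of_nat b * sym_coeff a (b - 1) j = (of_nat b - of_nat j) * sym_coeff a b j"
  proof -
    have "of_nat b * sym_coeff a (b - 1) j = ffall (of_nat a) j * (of_nat b * ffall (of_nat (b - 1)) j) / (fact j * 2 ^ j)"
      unfolding sym_coeff_def by (simp only: times_divide_eq_right mult.assoc mult.left_commute)
    also have "\<dots> = (of_nat b - of_nat j) * sym_coeff a b j"
      unfolding ffall_pred sym_coeff_def by (simp add: mult_ac)
    finally show ?thesis .
  qed
  have C: "(if 0 < j then of_nat b * of_nat (Suc a - j) * sym_coeff a (b - 1) (j - 1) else 0) = 2 * of_nat j * sym_coeff a b j"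
  proof (cases j)
    case 0 then show ?thesis by simp
  next
    case (Suc i)
    have "of_nat b * of_nat (Suc a - j) * sym_coeff a (b - 1) (j - 1)
        = (of_nat (Suc a - Suc i) * ffall (of_nat a) i) * (of_nat b * ffall (of_nat (b - 1)) i) / (fact i * 2 ^ i)"
      unfolding sym_coeff_def Suc by (simp add: mult_ac)
    also have "\<dots> = ffall (of_nat a) j * ffall (of_nat b) j / (fact i * 2 ^ i)"
      by (simp only: ffall_trunc ffall_pred_Suc Suc)
    also have "\<dots> = 2 * of_nat j * sym_coeff a b j"
    proof -
      have "(fact j * 2 ^ j :: complex) = 2 * of_nat j * (fact i * 2 ^ i)"
        by (simp add: Suc fact_Suc mult_ac)
      moreover have "(fact i * 2 ^ i :: complex) \<noteq> 0" by simp
      ultimately show ?thesis using Suc of_nat_neq_0[of i, unfolded of_nat_Suc, where ?'a=complex] unfolding sym_coeff_def by (simp add: divide_simps)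
    qed
    finally show ?thesis using Suc by simp
  qed
  show ?thesis unfolding A B C by (simp add: algebra_simps)
qed

lemma sym_coeff_zero_a: "a < j \<Longrightarrow> sym_coeff a b j = 0" by (simp add: sym_coeff_def ffall_nat_zero)
lemma sym_coeff_zero_b: "b < j \<Longrightarrow> sym_coeff a b j = 0" by (simp add: sym_coeff_def ffall_nat_zero)

lemma sym_pbw_coeff_rec:
  "of_nat (a + b + c) * sym_pbw_coeff a b c z =
     of_nat a * (if z \<le> a - 1 + c then sym_pbw_coeff (a - 1) b c z else 0)
   + of_nat b * ((if z \<le> b - 1 + c then sym_pbw_coeff a (b - 1) c z else 0)
        + (if 0 < z then of_nat (Suc (a + c) - z) * sym_pbw_coeff a (b - 1) c (z - 1) else 0))
   + of_nat c * (if z = 0 then 0 else sym_pbw_coeff a b (c - 1) (z - 1))"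
proof -
  have gA: "of_nat a * (if z \<le> a - 1 + c then sym_pbw_coeff (a - 1) b c z else 0) = of_nat a * sym_pbw_coeff (a - 1) b c z"
  proof (cases "a = 0 \<or> z \<le> a - 1 + c")
    case False
    then have "a - 1 < z - c" "c \<le> z" by auto
    then show ?thesis using False by (simp add: sym_pbw_coeff_def sym_coeff_zero_a)
  qed auto
  have gB: "(if z \<le> b - 1 + c then sym_pbw_coeff a (b - 1) c z else 0) = sym_pbw_coeff a (b - 1) c z \<or> b = 0"
  proof (cases "b = 0 \<or> z \<le> b - 1 + c")
    case False
    then have "b - 1 < z - c" "c \<le> z" by auto
    then show ?thesis using False by (simp add: sym_pbw_coeff_def sym_coeff_zero_b)
  qed auto
  have gB': "of_nat b * (if z \<le> b - 1 + c then sym_pbw_coeff a (b - 1) c z else 0) = of_nat b * sym_pbw_coeff a (b - 1) c z"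
    using gB by auto
  show ?thesis
  proof (cases "c \<le> z")
    case False
    then show ?thesis unfolding gA distrib_left gB' by (auto simp: sym_pbw_coeff_def)
  next
    case True
    define j where "j = z - c"
    have z: "z = c + j" using True j_def by simp
    have t1: "sym_pbw_coeff a b c z = sym_coeff a b j" "sym_pbw_coeff (a - 1) b c z = sym_coeff (a - 1) b j" "sym_pbw_coeff a (b - 1) c z = sym_coeff a (b - 1) j"
      by (simp_all add: sym_pbw_coeff_def z)
    have t2: "(if 0 < z then of_nat (Suc (a + c) - z) * sym_pbw_coeff a (b - 1) c (z - 1) else 0)
        = (if 0 < j then of_nat (Suc a - j) * sym_coeff a (b - 1) (j - 1) else 0)"
      by (cases j) (auto simp: sym_pbw_coeff_def z)
    have t3: "of_nat c * (if z = 0 then 0 else sym_pbw_coeff a b (c - 1) (z - 1)) = of_nat c * sym_coeff a b j"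
      by (cases c) (auto simp: sym_pbw_coeff_def z)
    have "of_nat (a + b + c) * sym_coeff a b j = (of_nat a + of_nat b) * sym_coeff a b j + of_nat c * sym_coeff a b j"
      by (simp add: algebra_simps)
    then show ?thesis unfolding gA distrib_left gB' unfolding t1 t2 t3 sym_coeff_rec by (simp add: algebra_simps)
  qed
qed

lemma sym_mon_pbw_sum: "sym_mon a b c = pbw_sum (a + c) (b + c) (sym_pbw_coeff a b c)"
proof (induction "a + b + c" arbitrary: a b c)
  case 0
  then have abc: "a = 0" "b = 0" "c = 0" by auto
  have "sym_mon 0 0 0 = 1" by (simp add: sym_mon_def cls_fa_sym orderings_sum_def orderings_nil)
  moreover have "pbw_sum 0 0 (sym_pbw_coeff 0 0 0) = 1" by (simp add: pbw_sum_def sym_pbw_coeff_def sym_coeff_def pbw_def)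
  ultimately show ?case using abc by simp
next
  case (Suc n)
  have n: "0 < a + b + c" by (metis Suc.hyps(2) zero_less_Suc)
  have IH: "sym_mon a' b' c' = pbw_sum (a' + c') (b' + c') (sym_pbw_coeff a' b' c')"
    if "a' + b' + c' = n" for a' b' c' using Suc.hyps that by blast
  define s where "s = (of_nat (a + b + c) :: complex)"
  define fA where "fA z = (if z \<le> a - 1 + c then sym_pbw_coeff (a - 1) b c z else 0)" for z
  define fB where "fB z = (if z \<le> b - 1 + c then sym_pbw_coeff a (b - 1) c z else 0)
    + (if 0 < z then of_nat (Suc (a + c) - z) * sym_pbw_coeff a (b - 1) c (z - 1) else 0)" for z
  define fC where "fC z = (if z = 0 then 0 else sym_pbw_coeff a b (c - 1) (z - 1))" for z
  have "s \<noteq> 0" using n unfolding s_def by (metis of_nat_0_eq_iff neq0_conv)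
  have TA: "scal (of_nat a / s) * (N1 * sym_mon (a - 1) b c) = pbw_sum (a + c) (b + c) (\<lambda>z. of_nat a / s * fA z)"
    using Suc.hyps(2) by (cases a) (simp_all add: pbw_sum_zero IH N1_pbw_sum pbw_sum_scale fA_def cong: if_cong)
  have TB: "scal (of_nat b / s) * (N2 * sym_mon a (b - 1) c) = pbw_sum (a + c) (b + c) (\<lambda>z. of_nat b / s * fB z)"
    using Suc.hyps(2) by (cases b) (simp_all add: pbw_sum_zero IH N2_pbw_sum pbw_sum_scale fB_def cong: if_cong)
  have TC: "scal (of_nat c / s) * (N3 * sym_mon a b (c - 1)) = pbw_sum (a + c) (b + c) (\<lambda>z. of_nat c / s * fC z)"
    using Suc.hyps(2) by (cases c) (simp_all add: pbw_sum_zero IH N3_pbw_sum pbw_sum_scale fC_def cong: if_cong)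
  have "sym_mon a b c = pbw_sum (a + c) (b + c) (\<lambda>z. of_nat a / s * fA z + of_nat b / s * fB z + of_nat c / s * fC z)"
    unfolding sym_mon_rec[OF n] s_def[symmetric] TA TB TC pbw_sum_add ..
  also have "\<dots> = pbw_sum (a + c) (b + c) (sym_pbw_coeff a b c)"
    using sym_pbw_coeff_rec[of a b c, folded s_def fA_def fB_def fC_def] \<open>s \<noteq> 0\<close>
    by (intro pbw_sum_cong) (simp add: field_simps)
  finally show ?case .
qed

section \<open>The singular vectors in normal form\<close>

(* The common shape of the coefficients of u for \<phi>_+, \<phi>_- and \<phi>_c: w = B, 0, (s + n)/2. *)
definition hcoeff :: "nat \<Rightarrow> complex \<Rightarrow> nat \<Rightarrow> complex" where
  "hcoeff A w z = ffall (of_nat A) z * ffall w z / fact z"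

lemma pbw_sum_sum: "(\<Sum>m\<in>M. pbw_sum A B (g m)) = pbw_sum A B (\<lambda>z. \<Sum>m\<in>M. g m z)"
  by (induction M rule: infinite_finite_induct) (simp_all add: pbw_sum_zero pbw_sum_add)

lemma FA_u1[simp]: "u1 n \<in> FA" by (simp add: u1_def)
lemma FA_u2[simp]: "u2 n \<in> FA" by (simp add: u2_def)

lemma upm_sum: "upm sg a b = (\<lambda>v. \<Sum>m\<le>min a b. fa_smul (sg ^ m / 2 ^ m * fact m * of_nat (a choose m) * of_nat (b choose m)) (fa_sym (a - m) (b - m) m) v)"
  by (simp add: upm_def fa_smul_def)
lemma uc_sum: "uc s n = (\<lambda>v. \<Sum>m\<le>n. fa_smul (1 / 2 ^ m * of_nat (n choose m) * Cay m (of_int s) (of_nat n)) (fa_sym (n - m) (n - m) m) v)"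
  by (simp add: uc_def fa_smul_def)

lemma FA_upm[simp]: "upm sg a b \<in> FA"
  unfolding upm_sum by (rule FA_sum) auto
lemma FA_uc[simp]: "uc s n \<in> FA"
  unfolding uc_sum by (rule FA_sum) auto

lemma cls_u1: "cls (u1 n) = pbw_sum n 0 (hcoeff n w)"
  by (simp add: u1_def cls_replicate pbw_sum_def hcoeff_def pbw_def)
lemma cls_u2: "cls (u2 n) = pbw_sum 0 n (hcoeff 0 w)"
  by (simp add: u2_def cls_replicate pbw_sum_def hcoeff_def pbw_def)

lemma cls_sum_fa_sym:
  "cls (\<lambda>v. \<Sum>m\<le>min A B. fa_smul (co m) (fa_sym (A - m) (B - m) m) v)
     = pbw_sum A B (\<lambda>z. \<Sum>m\<le>z. co m * sym_coeff (A - m) (B - m) (z - m))"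
proof -
  have "cls (\<lambda>v. \<Sum>m\<le>min A B. fa_smul (co m) (fa_sym (A - m) (B - m) m) v)
      = (\<Sum>m\<le>min A B. scal (co m) * sym_mon (A - m) (B - m) m)"
    by (simp add: cls_sum cls_smul sym_mon_def)
  also have "\<dots> = (\<Sum>m\<le>min A B. pbw_sum A B (\<lambda>z. co m * sym_pbw_coeff (A - m) (B - m) m z))"
    by (rule sum.cong) (simp_all add: sym_mon_pbw_sum pbw_sum_scale)
  also have "\<dots> = pbw_sum A B (\<lambda>z. \<Sum>m\<le>min A B. co m * sym_pbw_coeff (A - m) (B - m) m z)"
    by (rule pbw_sum_sum)
  also have "\<dots> = pbw_sum A B (\<lambda>z. \<Sum>m\<le>z. co m * sym_coeff (A - m) (B - m) (z - m))"
    by (rule pbw_sum_cong, rule sum.mono_neutral_cong_right) (auto simp: sym_pbw_coeff_def)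
  finally show ?thesis .
qed

lemma cls_upm: "cls (upm sg a b) = pbw_sum a b (\<lambda>z. ffall (of_nat a) z * ffall (of_nat b) z * (sg + 1) ^ z / (2 ^ z * fact z))"
proof -
  define co where "co m = sg ^ m / 2 ^ m * fact m * of_nat (a choose m) * of_nat (b choose m)" for m :: nat
  have "cls (upm sg a b) = pbw_sum a b (\<lambda>z. \<Sum>m\<le>z. co m * sym_coeff (a - m) (b - m) (z - m))"
    unfolding upm_sum co_def by (rule cls_sum_fa_sym)
  also have "\<dots> = pbw_sum a b (\<lambda>z. ffall (of_nat a) z * ffall (of_nat b) z * (sg + 1) ^ z / (2 ^ z * fact z))"
  proof (rule pbw_sum_cong)
    fix z assume z: "z \<le> min a b"
    have "(\<Sum>m\<le>z. co m * sym_coeff (a - m) (b - m) (z - m))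
        = (\<Sum>m\<le>z. of_nat (z choose m) * sg ^ m * 1 ^ (z - m) * (ffall (of_nat a) z * ffall (of_nat b) z / (2 ^ z * fact z)))"
    proof (rule sum.cong)
      fix m assume "m \<in> {..z}"
      then have mz: "m \<le> z" and ma: "m \<le> a" and mb: "m \<le> b" using z by auto
      have A: "of_nat (a choose m) * ffall (of_nat (a - m)) (z - m) = ffall (of_nat a :: complex) z / fact m"
        using choose_mult_ffall[OF mz, of a] ma by (simp add: of_nat_diff)
      have B: "of_nat (b choose m) * ffall (of_nat (b - m)) (z - m) = ffall (of_nat b :: complex) z / fact m"
        using choose_mult_ffall[OF mz, of b] mb by (simp add: of_nat_diff)
      have "co m * sym_coeff (a - m) (b - m) (z - m)
          = sg ^ m * fact m * (of_nat (a choose m) * ffall (of_nat (a - m)) (z - m)) * (of_nat (b choose m) * ffall (of_nat (b - m)) (z - m))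
            / (2 ^ m * 2 ^ (z - m) * fact (z - m))"
        by (simp add: co_def sym_coeff_def field_simps)
      also have "\<dots> = sg ^ m * (ffall (of_nat a) z * ffall (of_nat b) z) * (1 / (fact m * fact (z - m))) / 2 ^ z"
        unfolding A B using mz by (simp add: field_simps flip: power_add)
      also have "\<dots> = of_nat (z choose m) * sg ^ m * 1 ^ (z - m) * (ffall (of_nat a) z * ffall (of_nat b) z / (2 ^ z * fact z))"
        unfolding inv_fact_choose[OF mz] by (simp add: field_simps)
      finally show "co m * sym_coeff (a - m) (b - m) (z - m) = of_nat (z choose m) * sg ^ m * 1 ^ (z - m) * (ffall (of_nat a) z * ffall (of_nat b) z / (2 ^ z * fact z))" .
    qed simp
    also have "\<dots> = (sg + 1) ^ z * (ffall (of_nat a) z * ffall (of_nat b) z / (2 ^ z * fact z))"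
      by (simp add: binomial_ring[of sg 1 z] sum_distrib_right sum_divide_distrib)
    finally show "(\<Sum>m\<le>z. co m * sym_coeff (a - m) (b - m) (z - m)) = ffall (of_nat a) z * ffall (of_nat b) z * (sg + 1) ^ z / (2 ^ z * fact z)"
      by simp
  qed
  finally show ?thesis .
qed

lemma cls_upm_plus: "cls (upm 1 a b) = pbw_sum a b (hcoeff a (of_nat b))"
  unfolding cls_upm by (rule pbw_sum_cong) (simp add: hcoeff_def)

lemma cls_upm_minus: "cls (upm (-1) a b) = pbw_sum a b (hcoeff a 0)"
  unfolding cls_upm by (rule pbw_sum_cong) (simp add: hcoeff_def ffall_zero_left power_0_left)

lemma cls_uc: "cls (uc s n) = pbw_sum n n (hcoeff n ((of_int s + of_nat n) / 2))"
proof -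
  define co where "co m = 1 / 2 ^ m * of_nat (n choose m) * Cay m (of_int s) (of_nat n)" for m :: nat
  have "cls (uc s n) = pbw_sum n n (\<lambda>z. \<Sum>m\<le>z. co m * sym_coeff (n - m) (n - m) (z - m))"
    using cls_sum_fa_sym[of co n n] by (simp add: uc_sum co_def)
  also have "\<dots> = pbw_sum n n (hcoeff n ((of_int s + of_nat n) / 2))"
  proof (rule pbw_sum_cong)
    fix z assume z: "z \<le> min n n"
    have "(\<Sum>m\<le>z. co m * sym_coeff (n - m) (n - m) (z - m))
        = (\<Sum>m\<le>z. ffall (of_nat n) z / (2 ^ z * fact z) * (of_nat (z choose m) * Cay m (of_int s) (of_nat n) * ffall (of_nat n - of_nat m) (z - m)))"
    proof (rule sum.cong)
      fix m assume "m \<in> {..z}"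
      then have mz: "m \<le> z" and mn: "m \<le> n" using z by auto
      have A: "of_nat (n choose m) * ffall (of_nat (n - m)) (z - m) = ffall (of_nat n :: complex) z / fact m"
        using choose_mult_ffall[OF mz, of n] mn by (simp add: of_nat_diff)
      have "co m * sym_coeff (n - m) (n - m) (z - m)
          = Cay m (of_int s) (of_nat n) * (of_nat (n choose m) * ffall (of_nat (n - m)) (z - m)) * ffall (of_nat (n - m)) (z - m)
            / (2 ^ m * 2 ^ (z - m) * fact (z - m))"
        by (simp add: co_def sym_coeff_def field_simps)
      also have "\<dots> = Cay m (of_int s) (of_nat n) * ffall (of_nat n) z * ffall (of_nat n - of_nat m) (z - m) * (1 / (fact m * fact (z - m))) / 2 ^ z"
        unfolding A using mz mn by (simp add: field_simps of_nat_diff flip: power_add)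
      also have "\<dots> = ffall (of_nat n) z / (2 ^ z * fact z) * (of_nat (z choose m) * Cay m (of_int s) (of_nat n) * ffall (of_nat n - of_nat m) (z - m))"
        unfolding inv_fact_choose[OF mz] by (simp add: field_simps)
      finally show "co m * sym_coeff (n - m) (n - m) (z - m) = ffall (of_nat n) z / (2 ^ z * fact z) * (of_nat (z choose m) * Cay m (of_int s) (of_nat n) * ffall (of_nat n - of_nat m) (z - m))" .
    qed simp
    also have "\<dots> = ffall (of_nat n) z / (2 ^ z * fact z) * (2 ^ z * ffall ((of_int s + of_nat n) / 2) z)"
      by (simp only: sum_distrib_left[symmetric] Cay_ffall_convolution)
    also have "\<dots> = hcoeff n ((of_int s + of_nat n) / 2) z" by (simp add: hcoeff_def)
    finally show "(\<Sum>m\<le>z. co m * sym_coeff (n - m) (n - m) (z - m)) = hcoeff n ((of_int s + of_nat n) / 2) z" .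
  qed
  finally show ?thesis .
qed


section \<open>Composition identities\<close>

lemma N1_pow_pbw_sum: "N1 ^ p * pbw_sum A B g = pbw_sum (A + p) B (\<lambda>z. if z \<le> A then g z else 0)"
proof (induction p)
  case 0 then show ?case by (simp add: pbw_sum_def)
next
  case (Suc p)
  have "N1 ^ Suc p * pbw_sum A B g = N1 * (N1 ^ p * pbw_sum A B g)" by (simp add: mult.assoc)
  also have "\<dots> = pbw_sum (Suc (A + p)) B (\<lambda>z. if z \<le> A + p then (if z \<le> A then g z else 0) else 0)"
    by (simp only: Suc N1_pbw_sum)
  also have "\<dots> = pbw_sum (A + Suc p) B (\<lambda>z. if z \<le> A then g z else 0)"
    unfolding add_Suc_right by (rule pbw_sum_cong) auto
  finally show ?case .
qed

lemma pbw_sum_N2_pow: "pbw_sum A B g * N2 ^ q = pbw_sum A (B + q) (\<lambda>z. if z \<le> B then g z else 0)"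
proof (induction q)
  case 0 then show ?case by (simp add: pbw_sum_def)
next
  case (Suc q)
  have "pbw_sum A B g * N2 ^ Suc q = (pbw_sum A B g * N2 ^ q) * N2" by (simp add: power_commutes mult.assoc)
  also have "\<dots> = pbw_sum A (Suc (B + q)) (\<lambda>z. if z \<le> B + q then (if z \<le> B then g z else 0) else 0)"
    by (simp only: Suc pbw_sum_N2)
  also have "\<dots> = pbw_sum A (B + Suc q) (\<lambda>z. if z \<le> B then g z else 0)"
    unfolding add_Suc_right by (rule pbw_sum_cong) auto
  finally show ?case .
qed

(* Pascal's rule for (w)_z; the hypothesis handles the new top monomial z = B + 1 \<le> A. *)
lemma N2_pbw_sum_hcoeff: assumes "B < A \<Longrightarrow> ffall w (Suc B) = 0"
  shows "N2 * pbw_sum A B (hcoeff A w) = pbw_sum A (Suc B) (hcoeff A (w + 1))"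
  unfolding N2_pbw_sum
proof (rule pbw_sum_cong)
  fix z assume z: "z \<le> min A (Suc B)"
  show "(if z \<le> B then hcoeff A w z else 0) + (if 0 < z then of_nat (Suc A - z) * hcoeff A w (z - 1) else 0) = hcoeff A (w + 1) z"
  proof (cases z)
    case 0 then show ?thesis by (simp add: hcoeff_def)
  next
    case (Suc i)
    have t: "of_nat (Suc A - z) * hcoeff A w (z - 1) = ffall (of_nat A) (Suc i) * ffall w i / fact i"
      unfolding Suc hcoeff_def using ffall_trunc[of A i] by (simp add: mult_ac)
    have p: "ffall (w + 1) (Suc i) = ffall w (Suc i) + of_nat (Suc i) * ffall w i" by (rule ffall_pascal)
    have "hcoeff A (w + 1) z = ffall (of_nat A) (Suc i) * ffall w (Suc i) / fact (Suc i) + ffall (of_nat A) (Suc i) * ffall w i / fact i"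
    proof -
      have f: "(of_nat (Suc i) :: complex) / fact (Suc i) = 1 / fact i"
        using of_nat_neq_0[of i, where ?'a=complex] by (simp del: of_nat_Suc add: fact_Suc)
      have "hcoeff A (w + 1) z = ffall (of_nat A) (Suc i) * ffall w (Suc i) / fact (Suc i) + ffall (of_nat A) (Suc i) * ffall w i * (of_nat (Suc i) / fact (Suc i))"
        unfolding Suc hcoeff_def p by (simp add: distrib_left add_divide_distrib mult_ac)
      then show ?thesis unfolding f by simp
    qed
    moreover have "ffall (of_nat A) (Suc i) * ffall w (Suc i) = 0" if "\<not> z \<le> B"
    proof -
      have "i = B" "B < A" using that z Suc by auto
      then show ?thesis using assms by simp
    qed
    ultimately show ?thesis using t Suc by (auto simp: hcoeff_def)
  qed
qed

lemma N2_pow_pbw_sum_hcoeff: assumes "\<And>i. B \<le> i \<Longrightarrow> i < B + q \<Longrightarrow> i < A \<Longrightarrow> ffall (w + of_nat (i - B)) (Suc i) = 0"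
  shows "N2 ^ q * pbw_sum A B (hcoeff A w) = pbw_sum A (B + q) (hcoeff A (w + of_nat q))"
  using assms
proof (induction q)
  case 0 then show ?case by simp
next
  case (Suc q)
  have IH: "N2 ^ q * pbw_sum A B (hcoeff A w) = pbw_sum A (B + q) (hcoeff A (w + of_nat q))"
    using Suc.prems by (intro Suc.IH) auto
  have c: "ffall (w + of_nat q) (Suc (B + q)) = 0" if "B + q < A"
    using Suc.prems[of "B + q"] that by simp
  have "N2 ^ Suc q * pbw_sum A B (hcoeff A w) = N2 * (N2 ^ q * pbw_sum A B (hcoeff A w))" by (simp add: mult.assoc)
  also have "\<dots> = pbw_sum A (Suc (B + q)) (hcoeff A (w + of_nat q + 1))"
    unfolding IH by (rule N2_pbw_sum_hcoeff) (rule c)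
  finally show ?case by (simp add: ac_simps)
qed

lemma pbw_sum_hcoeff_0: "pbw_sum A B (hcoeff A 0) = N1 ^ A * N2 ^ B"
proof -
  have "pbw_sum A B (hcoeff A 0) = (\<Sum>z\<le>min A B. if z = 0 then pbw A B 0 else 0)"
    unfolding pbw_sum_def by (rule sum.cong) (auto simp: hcoeff_def ffall_nat_zero[of 0, simplified])
  also have "\<dots> = pbw A B 0" by (simp add: sum.delta)
  finally show ?thesis by (simp add: pbw_def)
qed

lemma cls_u1_pow: "cls (u1 n) = N1 ^ n" by (simp add: u1_def cls_replicate)
lemma cls_u2_pow: "cls (u2 n) = N2 ^ n" by (simp add: u2_def cls_replicate)

lemma N2_pow_N1_pow: "N2 ^ b * N1 ^ a = pbw_sum a b (hcoeff a (of_nat b))"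
proof -
  have "N1 ^ a = pbw_sum a 0 (hcoeff a 0)" using cls_u1[of a 0] by (simp add: cls_u1_pow)
  then have "N2 ^ b * N1 ^ a = N2 ^ b * pbw_sum a 0 (hcoeff a 0)" by simp
  also have "\<dots> = pbw_sum a (0 + b) (hcoeff a (0 + of_nat b))"
    by (rule N2_pow_pbw_sum_hcoeff) (simp add: ffall_nat_zero)
  finally show ?thesis by simp
qed

lemma cls_upm_plus_eq_u2_u1: "cls (upm 1 a b) = cls (u2 b) * cls (u1 a)"
  by (simp add: cls_upm_plus cls_u1_pow cls_u2_pow N2_pow_N1_pow)

lemma cls_upm_minus_eq_u1_u2: "cls (upm (-1) a b) = cls (u1 a) * cls (u2 b)"
  by (simp add: cls_upm_minus cls_u1_pow cls_u2_pow pbw_sum_hcoeff_0)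

lemma hcoeff_comm: "hcoeff A (of_nat B) = hcoeff B (of_nat A)"
  by (simp add: hcoeff_def fun_eq_iff mult.commute)

lemma hcoeff_beyond_of_nat: "B < z \<Longrightarrow> hcoeff A (of_nat B) z = 0"
  by (simp add: hcoeff_def ffall_nat_zero)

lemma hcoeff_beyond_A: "A < z \<Longrightarrow> hcoeff A w z = 0" by (simp add: hcoeff_def ffall_nat_zero)
lemma hcoeff_beyond_diff: "l \<le> k \<Longrightarrow> k - l < z \<Longrightarrow> hcoeff A (of_nat k - of_nat l) z = 0"
  using hcoeff_beyond_of_nat[of "k - l" z A] by (simp add: of_nat_diff)

lemma cls_uc_eq_u1_upm_plus: "k \<le> l \<Longrightarrow> cls (uc (2 * int k - int l) l) = cls (u1 (l - k)) * cls (upm 1 k l)"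
proof -
  assume kl: "k \<le> l"
  have u: "(of_int (2 * int k - int l) + of_nat l) / 2 = (of_nat k :: complex)" by simp
  have "cls (u1 (l - k)) * cls (upm 1 k l) = pbw_sum (k + (l - k)) l (\<lambda>z. if z \<le> k then hcoeff k (of_nat l) z else 0)"
    by (simp add: cls_u1_pow cls_upm_plus N1_pow_pbw_sum)
  also have "\<dots> = pbw_sum l l (hcoeff l (of_nat k))"
    using kl unfolding le_add_diff_inverse[OF kl] by (intro pbw_sum_cong) (auto simp: hcoeff_comm hcoeff_beyond_A)
  finally show ?thesis by (simp add: cls_uc u)
qed

lemma cls_u1_uc_eq_upm_plus: "l \<le> k \<Longrightarrow> cls (u1 (k - l)) * cls (uc (2 * int k - int l) l) = cls (upm 1 k l)"
proof -
  assume kl: "l \<le> k"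
  have u: "(of_int (2 * int k - int l) + of_nat l) / 2 = (of_nat k :: complex)" by simp
  have "cls (u1 (k - l)) * cls (uc (2 * int k - int l) l) = pbw_sum (l + (k - l)) l (\<lambda>z. if z \<le> l then hcoeff l (of_nat k) z else 0)"
    by (simp add: cls_u1_pow cls_uc u N1_pow_pbw_sum)
  also have "\<dots> = pbw_sum k l (hcoeff k (of_nat l))"
    using kl unfolding le_add_diff_inverse[OF kl] by (intro pbw_sum_cong) (auto simp: hcoeff_comm)
  finally show ?thesis by (simp add: cls_upm_plus)
qed

lemma cls_uc_eq_upm_plus_u2: "l \<le> k \<Longrightarrow> cls (uc (int k - 2 * int l) k) = cls (upm 1 k (k - l)) * cls (u2 l)"
proof -
  assume kl: "l \<le> k"
  have u: "(of_int (int k - 2 * int l) + of_nat k) / 2 = (of_nat (k - l) :: complex)" using kl by (simp add: of_nat_diff)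
  have "cls (upm 1 k (k - l)) * cls (u2 l) = pbw_sum k (k - l + l) (\<lambda>z. if z \<le> k - l then hcoeff k (of_nat (k - l)) z else 0)"
    by (simp add: cls_u2_pow cls_upm_plus pbw_sum_N2_pow)
  also have "\<dots> = pbw_sum k k (hcoeff k (of_nat (k - l)))"
    using kl unfolding le_add_diff_inverse2[OF kl] by (intro pbw_sum_cong) (auto simp: hcoeff_beyond_diff)
  finally have R: "cls (upm 1 k (k - l)) * cls (u2 l) = pbw_sum k k (hcoeff k (of_nat (k - l)))" .
  show ?thesis using R by (simp only: cls_uc u)
qed

lemma cls_u2_uc_eq_upm_minus: "k \<le> l \<Longrightarrow> cls (u2 (l - k)) * cls (uc (int k - 2 * int l) k) = cls (upm (-1) k l)"
proof -
  assume kl: "k \<le> l"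
  have u: "(of_int (int k - 2 * int l) + of_nat k) / 2 = (of_nat k - of_nat l :: complex)" by simp
  have "cls (u2 (l - k)) * cls (uc (int k - 2 * int l) k) = pbw_sum k (k + (l - k)) (hcoeff k (of_nat k - of_nat l + of_nat (l - k)))"
    unfolding cls_u2_pow cls_uc u by (rule N2_pow_pbw_sum_hcoeff) auto
  also have "\<dots> = pbw_sum k l (hcoeff k 0)" using kl by (simp add: of_nat_diff)
  finally show ?thesis by (simp add: cls_upm_minus)
qed

lemma cls_uc_eq_upm_plus_diag: "cls (uc (int k) k) = cls (upm 1 k k)"
  by (simp add: cls_uc cls_upm_plus)

lemma cls_uc_eq_upm_minus_diag: "cls (uc (- int k) k) = cls (upm (-1) k k)"
  by (simp add: cls_uc cls_upm_minus)

lemmas composition_identities =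
  cls_upm_plus_eq_u2_u1 cls_upm_minus_eq_u1_u2 cls_uc_eq_u1_upm_plus cls_u1_uc_eq_upm_plus
  cls_uc_eq_upm_plus_u2 cls_u2_uc_eq_upm_minus cls_uc_eq_upm_plus_diag cls_uc_eq_upm_minus_diag


section \<open>Raising operators on PBW monomials\<close>

lemma shift_N_pow: assumes "Z * N = N * (Z + scal s)" shows "Z * N ^ a = N ^ a * (Z + scal (of_nat a * s))"
proof (induction a)
  case 0 then show ?case by simp
next
  case (Suc a)
  have "Z * N ^ Suc a = (Z * N ^ a) * N" by (simp add: power_commutes mult.assoc)
  also have "\<dots> = N ^ a * (Z * N) + N ^ a * (scal (of_nat a * s) * N)" by (simp add: Suc distrib_left distrib_right mult.assoc)
  also have "\<dots> = N ^ a * N * (Z + scal s) + N ^ a * N * scal (of_nat a * s)"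
    by (simp add: assms scal_comm mult.assoc)
  also have "\<dots> = N ^ Suc a * (Z + scal (of_nat (Suc a) * s))"
    by (simp add: power_commutes distrib_left scal_add algebra_simps)
  finally show ?case .
qed

lemma shift_N_pow': assumes "Z * N = N * (Z + scal s)" shows "(Z + scal t) * N ^ a = N ^ a * (Z + scal (t + of_nat a * s))"
proof -
  have "(Z + scal t) * N ^ a = Z * N ^ a + scal t * N ^ a" by (simp add: distrib_right)
  also have "\<dots> = N ^ a * (Z + scal (of_nat a * s)) + N ^ a * scal t" by (simp add: shift_N_pow[OF assms] scal_comm)
  also have "\<dots> = N ^ a * (Z + scal (t + of_nat a * s))" by (simp add: distrib_left scal_add algebra_simps)
  finally show ?thesis .
qed

lemma numeral_comm: "numeral n * Z = Z * (numeral n :: U)"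
  by (metis scal_numeral scal_comm)

lemma Y1_N1_shift: "Y1 * N1 = N1 * (Y1 + scal (-2))" by (simp add: Y1_N1_comm right_diff_distrib scal_minus numeral_comm)
lemma Y1_N2_shift: "Y1 * N2 = N2 * (Y1 + scal 1)" by (simp add: Y1_N2_comm distrib_left)
lemma Y1_N3_shift: "Y1 * N3 = N3 * (Y1 + scal (-1))" by (simp add: Y1_N3_comm right_diff_distrib)
lemma Y2_N1_shift: "Y2 * N1 = N1 * (Y2 + scal 1)" by (simp add: Y2_N1_comm distrib_left)
lemma Y2_N2_shift: "Y2 * N2 = N2 * (Y2 + scal (-2))" by (simp add: Y2_N2_comm right_diff_distrib scal_minus numeral_comm)
lemma Y2_N3_shift: "Y2 * N3 = N3 * (Y2 + scal (-1))" by (simp add: Y2_N3_comm right_diff_distrib)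
lemma X12_N2_shift: "X12 * N2 = N2 * (X12 + scal 0)" by (simp add: X12_N2_comm)
lemma X23_N1_shift: "X23 * N1 = N1 * (X23 + scal 0)" by (simp add: X23_N1_comm)

lemma Y1_pbw: "Y1 * pbw a b c = pbw a b c * (Y1 + scal (of_nat b - 2 * of_nat a - of_nat c))"
proof -
  have "Y1 * pbw a b c = ((Y1 + scal 0) * N1 ^ a) * N2 ^ b * N3 ^ c"
    by (simp add: pbw_def mult.assoc)
  also have "\<dots> = N1 ^ a * (((Y1 + scal (0 + of_nat a * -2)) * N2 ^ b) * N3 ^ c)"
    by (simp only: shift_N_pow'[OF Y1_N1_shift] mult.assoc)
  also have "\<dots> = N1 ^ a * (N2 ^ b * ((Y1 + scal (0 + of_nat a * -2 + of_nat b * 1)) * N3 ^ c))"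
    by (simp only: shift_N_pow'[OF Y1_N2_shift] mult.assoc)
  also have "\<dots> = N1 ^ a * (N2 ^ b * (N3 ^ c * (Y1 + scal (0 + of_nat a * -2 + of_nat b * 1 + of_nat c * -1))))"
    by (simp only: shift_N_pow'[OF Y1_N3_shift] mult.assoc)
  also have "\<dots> = pbw a b c * (Y1 + scal (of_nat b - 2 * of_nat a - of_nat c))"
    by (simp add: pbw_def mult.assoc algebra_simps)
  finally show ?thesis .
qed

lemma Y2_pbw: "Y2 * pbw a b c = pbw a b c * (Y2 + scal (of_nat a - 2 * of_nat b - of_nat c))"
proof -
  have "Y2 * pbw a b c = ((Y2 + scal 0) * N1 ^ a) * N2 ^ b * N3 ^ c"
    by (simp add: pbw_def mult.assoc)
  also have "\<dots> = N1 ^ a * (((Y2 + scal (0 + of_nat a * 1)) * N2 ^ b) * N3 ^ c)"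
    by (simp only: shift_N_pow'[OF Y2_N1_shift] mult.assoc)
  also have "\<dots> = N1 ^ a * (N2 ^ b * ((Y2 + scal (0 + of_nat a * 1 + of_nat b * -2)) * N3 ^ c))"
    by (simp only: shift_N_pow'[OF Y2_N2_shift] mult.assoc)
  also have "\<dots> = N1 ^ a * (N2 ^ b * (N3 ^ c * (Y2 + scal (0 + of_nat a * 1 + of_nat b * -2 + of_nat c * -1))))"
    by (simp only: shift_N_pow'[OF Y2_N3_shift] mult.assoc)
  also have "\<dots> = pbw a b c * (Y2 + scal (of_nat a - 2 * of_nat b - of_nat c))"
    by (simp add: pbw_def mult.assoc algebra_simps)
  finally show ?thesis .
qed

lemma scal_shift_step: "scal t * (Z + scal (1 - t)) + (Z + scal (t * -2)) = scal (1 + t) * (Z + scal (1 - (1 + t)))"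
proof -
  have "scal t * (Z + scal (1 - t)) + (Z + scal (t * -2)) = scal (1 + t) * Z + scal (t * (1 - t) + t * -2)"
    by (simp only: distrib_left distrib_right scal_add scal_one scal_mult add_ac mult_1)
  also have "t * (1 - t) + t * -2 = (1 + t) * (1 - (1 + t))" by (simp add: algebra_simps)
  also have "scal (1 + t) * Z + scal ((1 + t) * (1 - (1 + t))) = scal (1 + t) * (Z + scal (1 - (1 + t)))"
    by (simp only: distrib_left scal_mult)
  finally show ?thesis .
qed

lemma raising_N_pow:
  assumes XN: "X * N = N * X + H" and HN: "H * N = N * (H + scal (-2))"
  shows "X * N ^ a = N ^ a * X + scal (of_nat a) * (N ^ (a - 1) * (H + scal (1 - of_nat a)))"
proof (induction a)
  case 0 then show ?case by simp
next
  case (Suc a)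
  have "X * N ^ Suc a = (X * N) * N ^ a" by (simp add: mult.assoc)
  also have "\<dots> = N * (X * N ^ a) + H * N ^ a" by (simp add: XN distrib_right mult.assoc)
  also have "H * N ^ a = N ^ a * (H + scal (of_nat a * -2))" by (rule shift_N_pow[OF HN])
  also have "N * (X * N ^ a) = N ^ Suc a * X + scal (of_nat a) * (N ^ a * (H + scal (1 - of_nat a)))"
  proof (cases a)
    case 0 then show ?thesis by (simp add: Suc)
  next
    case (Suc a')
    have "N * (X * N ^ a) = N * N ^ a * X + scal (of_nat a) * ((N * N ^ a') * (H + scal (1 - of_nat a)))"
      unfolding \<open>X * N ^ a = _\<close> using Suc by (simp add: distrib_left scal_comm_left mult.assoc)
    then show ?thesis using Suc by simp
  qed
  finally have "X * N ^ Suc a = N ^ Suc a * X + N ^ a * (scal (of_nat a) * (H + scal (1 - of_nat a)) + (H + scal (of_nat a * -2)))"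
    by (simp add: distrib_left scal_comm_left add.assoc)
  also have "scal (of_nat a) * (H + scal (1 - of_nat a)) + (H + scal (of_nat a * -2)) = scal (of_nat (Suc a)) * (H + scal (1 - of_nat (Suc a)))"
    using scal_shift_step[of "of_nat a" H] by simp
  finally show ?case by (simp add: scal_comm_left)
qed

lemma commutator_N_pow:
  assumes XN: "X * N = N * X + M" and NM: "N * M = M * N"
  shows "X * N ^ c = N ^ c * X + scal (of_nat c) * (M * N ^ (c - 1))"
proof (induction c)
  case 0 then show ?case by simp
next
  case (Suc c)
  have "X * N ^ Suc c = (X * N) * N ^ c" by (simp add: mult.assoc)
  also have "\<dots> = N * (X * N ^ c) + M * N ^ c" by (simp add: XN distrib_right mult.assoc)
  also have "N * (X * N ^ c) = N ^ Suc c * X + scal (of_nat c) * (M * N ^ c)"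
  proof (cases c)
    case 0 then show ?thesis by (simp add: Suc)
  next
    case (Suc c')
    have "N * (X * N ^ c) = N * N ^ c * X + scal (of_nat c) * ((N * M) * N ^ c')"
      unfolding \<open>X * N ^ c = _\<close> using Suc by (simp add: distrib_left scal_comm_left mult.assoc)
    then show ?thesis using Suc by (simp add: NM mult.assoc)
  qed
  finally show ?case by (simp add: scal_add distrib_right algebra_simps)
qed

lemma X12_N1_pow: "X12 * N1 ^ a = N1 ^ a * X12 + scal (of_nat a) * (N1 ^ (a - 1) * (Y1 + scal (1 - of_nat a)))"
  by (rule raising_N_pow[OF X12_N1_comm Y1_N1_shift])

lemma X12_N3_pow: "X12 * N3 ^ c = N3 ^ c * X12 - scal (of_nat c) * (N2 * N3 ^ (c - 1))"
proof -
  have "X12 * N3 = N3 * X12 + - N2" "N3 * - N2 = - N2 * N3"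
    by (simp_all add: X12_N3_comm N3_N2_comm)
  then show ?thesis using commutator_N_pow[of X12 N3 "- N2" c] by simp
qed

lemma X12_N2_pow: "X12 * N2 ^ b = N2 ^ b * X12"
  using shift_N_pow[OF X12_N2_shift, of b] by simp

lemma X12_pbw: "X12 * pbw a b c = pbw a b c * X12 - scal (of_nat c) * pbw a (Suc b) (c - 1)
   + scal (of_nat a) * (pbw (a - 1) b c * (Y1 + scal (1 - of_nat a + of_nat b - of_nat c)))"
proof -
  have "X12 * pbw a b c = N1 ^ a * N2 ^ b * (X12 * N3 ^ c) + scal (of_nat a) * (N1 ^ (a - 1) * (((Y1 + scal (1 - of_nat a)) * N2 ^ b) * N3 ^ c))"
    by (simp add: pbw_def X12_N1_pow X12_N2_pow distrib_right scal_comm_left mult.assoc flip: mult.assoc[of X12])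
  also have "((Y1 + scal (1 - of_nat a)) * N2 ^ b) * N3 ^ c = N2 ^ b * ((Y1 + scal (1 - of_nat a + of_nat b * 1)) * N3 ^ c)"
    by (simp only: shift_N_pow'[OF Y1_N2_shift] mult.assoc)
  also have "(Y1 + scal (1 - of_nat a + of_nat b * 1)) * N3 ^ c = N3 ^ c * (Y1 + scal (1 - of_nat a + of_nat b * 1 + of_nat c * -1))"
    by (rule shift_N_pow'[OF Y1_N3_shift])
  finally have fin: "X12 * pbw a b c = N1 ^ a * N2 ^ b * (X12 * N3 ^ c) + scal (of_nat a) * (N1 ^ (a - 1) * (N2 ^ b * (N3 ^ c * (Y1 + scal (1 - of_nat a + of_nat b * 1 + of_nat c * -1)))))" .
  then show ?thesis
  proof -
    have pc: "N2 ^ b * (N2 * X) = N2 * (N2 ^ b * X)" for X by (simp add: power_commutes flip: mult.assoc)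
    show ?thesis using fin
      by (simp add: X12_N3_pow right_diff_distrib pbw_def scal_comm_left mult.assoc pc)
  qed
qed

lemma N2_pow_N1: "N2 ^ b * N1 = N1 * N2 ^ b + scal (of_nat b) * (N2 ^ (b - 1) * N3)"
proof (induction b)
  case 0 then show ?case by simp
next
  case (Suc b)
  have "N2 ^ Suc b * N1 = N2 * (N2 ^ b * N1)" by (simp add: mult.assoc)
  also have "\<dots> = (N2 * N1) * N2 ^ b + scal (of_nat b) * (N2 * N2 ^ (b - 1) * N3)"
    by (simp add: Suc distrib_left scal_comm_left mult.assoc)
  also have "N2 * N2 ^ (b - 1) * N3 = (if b = 0 then N2 * N3 else N2 ^ b * N3)"
    by (cases b) simp_all
  also have "(N2 * N1) * N2 ^ b = N1 * N2 ^ Suc b + N2 ^ b * N3"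
    by (simp add: N2_N1_comm distrib_right mult.assoc N3_N2_pow_comm[symmetric])
  finally show ?case by (cases b) (simp_all add: scal_add distrib_right add.assoc mult_2)
qed


lemma X23_N2_pow: "X23 * N2 ^ b = N2 ^ b * X23 + scal (of_nat b) * (N2 ^ (b - 1) * (Y2 + scal (1 - of_nat b)))"
  by (rule raising_N_pow[OF X23_N2_comm Y2_N2_shift])

lemma X23_N3_pow: "X23 * N3 ^ c = N3 ^ c * X23 + scal (of_nat c) * (N1 * N3 ^ (c - 1))"
  by (rule commutator_N_pow[OF X23_N3_comm N3_N1_comm])

lemma X23_N1_pow: "X23 * N1 ^ a = N1 ^ a * X23"
  using shift_N_pow[OF X23_N1_shift, of a] by simp

lemma N1_pow_N1_comm: "N1 ^ a * (N1 * X) = N1 * (N1 ^ a * X)"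
  by (simp add: power_commutes flip: mult.assoc)

lemma X23_pbw: "X23 * pbw a b c = pbw a b c * X23
   + scal (of_nat c) * (pbw (Suc a) b (c - 1) + scal (of_nat b) * pbw a (b - 1) c)
   + scal (of_nat b) * (pbw a (b - 1) c * (Y2 + scal (1 - of_nat b - of_nat c)))"
proof -
  have sA: "X23 * pbw a b c = N1 ^ a * (X23 * (N2 ^ b * N3 ^ c))"
    by (simp add: pbw_def X23_N1_pow flip: mult.assoc)
  have sB: "X23 * (N2 ^ b * N3 ^ c) = N2 ^ b * (X23 * N3 ^ c) + scal (of_nat b) * (N2 ^ (b - 1) * ((Y2 + scal (1 - of_nat b)) * N3 ^ c))"
  proof -
    have "X23 * (N2 ^ b * N3 ^ c) = (N2 ^ b * X23 + scal (of_nat b) * (N2 ^ (b - 1) * (Y2 + scal (1 - of_nat b)))) * N3 ^ c"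
      by (simp only: X23_N2_pow mult.assoc[symmetric])
    also have "\<dots> = N2 ^ b * (X23 * N3 ^ c) + scal (of_nat b) * (N2 ^ (b - 1) * ((Y2 + scal (1 - of_nat b)) * N3 ^ c))"
      by (rule trans[OF distrib_right]) (simp only: mult.assoc)
    finally show ?thesis .
  qed
  have sC: "(Y2 + scal (1 - of_nat b)) * N3 ^ c = N3 ^ c * (Y2 + scal (1 - of_nat b - of_nat c))"
    using shift_N_pow'[OF Y2_N3_shift, of "1 - of_nat b" c] by (simp add: algebra_simps)
  have sD: "N2 ^ b * (X23 * N3 ^ c) = N2 ^ b * N3 ^ c * X23 + scal (of_nat c) * (N2 ^ b * N1 * N3 ^ (c - 1))"
    by (simp only: X23_N3_pow distrib_left scal_comm_left mult.assoc)
  have sE: "N1 ^ a * (N2 ^ b * N1 * N3 ^ (c - 1)) = pbw (Suc a) b (c - 1) + scal (of_nat b) * (N1 ^ a * (N2 ^ (b - 1) * (N3 * N3 ^ (c - 1))))"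
    by (simp only: N2_pow_N1 distrib_left distrib_right scal_comm_left pbw_def mult.assoc power_Suc N1_pow_N1_comm)
  have sF: "scal (of_nat c) * (scal (of_nat b) * (N1 ^ a * (N2 ^ (b - 1) * (N3 * N3 ^ (c - 1))))) = scal (of_nat c) * (scal (of_nat b) * pbw a (b - 1) c)"
    by (cases c) (simp_all add: pbw_def mult.assoc)
  have "X23 * pbw a b c = N1 ^ a * (N2 ^ b * N3 ^ c * X23) + scal (of_nat c) * (N1 ^ a * (N2 ^ b * N1 * N3 ^ (c - 1)))
       + scal (of_nat b) * (N1 ^ a * (N2 ^ (b - 1) * (N3 ^ c * (Y2 + scal (1 - of_nat b - of_nat c)))))"
    unfolding sA sB sC sD by (simp only: distrib_left scal_comm_left)
  also have "\<dots> = pbw a b c * X23 + scal (of_nat c) * (pbw (Suc a) b (c - 1) + scal (of_nat b) * pbw a (b - 1) c)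
       + scal (of_nat b) * (pbw a (b - 1) c * (Y2 + scal (1 - of_nat b - of_nat c)))"
    unfolding sE distrib_left sF by (simp only: pbw_def mult.assoc)
  finally show ?thesis .
qed


section \<open>The annihilator of the highest weight vector\<close>

lemma verma_ker_of_cls_eq: "p \<in> FA \<Longrightarrow> q \<in> FA \<Longrightarrow> cls p = cls q \<Longrightarrow> fa_sub p q \<in> verma_ker mu"
  using cls_eq_iff rel_ideal_verma_ker by blast

lemma FA_borel: "g \<in> borel_gens lam \<Longrightarrow> g \<in> FA"
  by (auto simp: borel_gens_def)

lemma verma_ker_FA: "p \<in> verma_ker mu \<Longrightarrow> p \<in> FA"
  by (induction rule: verma_ker.induct) (auto simp: FA_borel)

lemma verma_ker_lmul: "p \<in> verma_ker mu \<Longrightarrow> c \<in> FA \<Longrightarrow> fa_mul c p \<in> verma_ker mu"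
proof (induction rule: verma_ker.induct)
  case vk_zero then show ?case by (simp add: verma_ker.vk_zero)
next
  case (vk_rel a b x y) then show ?case
    using verma_ker.vk_rel[of "fa_mul c a" b x y mu] by (simp add: fa_mul_assoc)
next
  case (vk_left a g) then show ?case
    using verma_ker.vk_left[of "fa_mul c a" g mu] by (simp add: fa_mul_assoc)
next
  case (vk_add p q) then show ?case
    by (simp add: verma_ker.vk_add fa_mul_add_right)
qed

lemma verma_ker_mul_of_borel_gens: assumes u: "u \<in> FA" and g: "\<And>g. g \<in> borel_gens (wsub mus rho) \<Longrightarrow> fa_mul g u \<in> verma_ker mut"
  shows "p \<in> verma_ker mus \<Longrightarrow> fa_mul p u \<in> verma_ker mut"
proof (induction rule: verma_ker.induct)
  case vk_zero then show ?case by (simp add: verma_ker.vk_zero)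
next
  case (vk_rel a b x y) then show ?case
    using verma_ker.vk_rel[of a "fa_mul b u" x y mut] u by (simp add: fa_mul_assoc)
next
  case (vk_left a g') then show ?case
    using verma_ker_lmul[OF g[OF vk_left(2)], of a] by (simp add: fa_mul_assoc)
next
  case (vk_add p q) then show ?case
    by (simp add: verma_ker.vk_add fa_mul_add_left)
qed

(* The left ideal of U annihilating the highest weight vector 1 \<otimes> 1 of N(mu). *)
definition Ann :: "wt \<Rightarrow> U set" where "Ann mu = cls ` verma_ker mu"

lemma Ann_cls: "p \<in> FA \<Longrightarrow> cls p \<in> Ann mu \<Longrightarrow> p \<in> verma_ker mu"
proof -
  assume p: "p \<in> FA" and "cls p \<in> Ann mu"
  then obtain q where q: "q \<in> verma_ker mu" "cls p = cls q" by (auto simp: Ann_def)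
  then have "fa_sub p q \<in> verma_ker mu" using p verma_ker_FA[OF q(1)] verma_ker_of_cls_eq[of p q mu] by simp
  then have "fa_add q (fa_sub p q) \<in> verma_ker mu" using q by (simp add: verma_ker.vk_add)
  moreover have "fa_add q (fa_sub p q) = p" by (simp add: fa_add_def fa_sub_def)
  ultimately show ?thesis by simp
qed

lemma Ann_zero[simp]: "0 \<in> Ann mu"
  unfolding Ann_def using verma_ker.vk_zero[of mu] cls_zero by (metis image_eqI)

lemma Ann_add: "X \<in> Ann mu \<Longrightarrow> Z \<in> Ann mu \<Longrightarrow> X + Z \<in> Ann mu"
proof -
  assume "X \<in> Ann mu" "Z \<in> Ann mu"
  then obtain p q where "p \<in> verma_ker mu" "q \<in> verma_ker mu" "X = cls p" "Z = cls q" by (auto simp: Ann_def)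
  then show ?thesis unfolding Ann_def
    by (intro image_eqI[of _ _ "fa_add p q"]) (simp_all add: cls_add verma_ker_FA verma_ker.vk_add)
qed

lemma Ann_lmul: "X \<in> Ann mu \<Longrightarrow> Z * X \<in> Ann mu"
proof (induction Z rule: U.abs_induct)
  case (1 c)
  then have c: "c \<in> FA" by simp
  from 1 obtain p where p: "p \<in> verma_ker mu" "X = cls p" by (auto simp: Ann_def)
  then show ?case unfolding Ann_def
    by (intro image_eqI[of _ _ "fa_mul c p"]) (simp_all add: cls_mul c verma_ker_FA verma_ker_lmul)
qed

lemma Ann_gen: assumes g: "g \<in> borel_gens (wsub mu rho)" shows "Z * cls g \<in> Ann mu"
proof (induction Z rule: U.abs_induct)
  case (1 c)
  then have c: "c \<in> FA" by simp
  have gF: "g \<in> FA" using FA_borel[OF g] .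
  show ?case unfolding Ann_def
    by (intro image_eqI[of _ _ "fa_mul c g"]) (simp_all add: cls_mul c gF g verma_ker.vk_left)
qed

lemma Ann_neg: "X \<in> Ann mu \<Longrightarrow> - X \<in> Ann mu"
proof -
  assume "X \<in> Ann mu"
  then have "(-1) * X \<in> Ann mu" by (rule Ann_lmul)
  then show ?thesis by simp
qed

lemma Ann_sub: "X \<in> Ann mu \<Longrightarrow> Z \<in> Ann mu \<Longrightarrow> X - Z \<in> Ann mu"
proof -
  assume "X \<in> Ann mu" "Z \<in> Ann mu"
  then have "X + (- Z) \<in> Ann mu" by (intro Ann_add Ann_neg)
  then show ?thesis by simp
qed

lemma Ann_sum: "(\<And>i. i \<in> M \<Longrightarrow> f i \<in> Ann mu) \<Longrightarrow> (\<Sum>i\<in>M. f i) \<in> Ann mu"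
proof (induction M rule: infinite_finite_induct)
  case (insert x F)
  then have "f x + (\<Sum>i\<in>F. f i) \<in> Ann mu" by (intro Ann_add) auto
  then show ?case using insert by simp
qed simp_all

definition lam1 :: "wt \<Rightarrow> complex" where "lam1 mu = w1 (wsub mu rho) - w2 (wsub mu rho)"
definition lam2 :: "wt \<Rightarrow> complex" where "lam2 mu = w2 (wsub mu rho) - w3 (wsub mu rho)"

lemma lam1_eq: "lam1 mu = w1 mu - w2 mu - 1" by (simp add: lam1_def wsub_def w1_def w2_def w3_def rho_def)
lemma lam2_eq: "lam2 mu = w2 mu - w3 mu - 1" by (simp add: lam2_def wsub_def w1_def w2_def w3_def rho_def)

lemma borel_gens_mem: "fa_word [E12] \<in> borel_gens lam" "fa_word [E13] \<in> borel_gens lam" "fa_word [E23] \<in> borel_gens lam"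
  "fa_sub (fa_word [H1]) (fa_const (w1 lam - w2 lam)) \<in> borel_gens lam"
  "fa_sub (fa_word [H2]) (fa_const (w2 lam - w3 lam)) \<in> borel_gens lam"
  unfolding borel_gens_def by blast+

lemma Ann_X12: "Z * X12 \<in> Ann mu" using Ann_gen[OF borel_gens_mem(1), where mu=mu and Z=Z] by (simp add: ugen_def)
lemma Ann_X23: "Z * X23 \<in> Ann mu" using Ann_gen[OF borel_gens_mem(3), where mu=mu and Z=Z] by (simp add: ugen_def)
lemma Ann_Y1: "Z * (Y1 - scal (lam1 mu)) \<in> Ann mu"
  using Ann_gen[OF borel_gens_mem(4), where mu=mu and Z=Z] unfolding lam1_def
  by (simp only: ugen_def cls_sub FA_word FA_const scal_def)
lemma Ann_Y2: "Z * (Y2 - scal (lam2 mu)) \<in> Ann mu"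
  using Ann_gen[OF borel_gens_mem(5), where mu=mu and Z=Z] unfolding lam2_def
  by (simp only: ugen_def cls_sub FA_word FA_const scal_def)

lemma verma_ker_mul_criterion:
  assumes u: "u \<in> FA"
    and s12: "X12 * cls u \<in> Ann mut" and s23: "X23 * cls u \<in> Ann mut"
    and s1: "(Y1 - scal (lam1 mus)) * cls u \<in> Ann mut" and s2: "(Y2 - scal (lam2 mus)) * cls u \<in> Ann mut"
  shows "\<forall>p\<in>verma_ker mus. fa_mul p u \<in> verma_ker mut"
proof
  fix p assume p: "p \<in> verma_ker mus"
  show "fa_mul p u \<in> verma_ker mut"
  proof (rule verma_ker_mul_of_borel_gens[OF u _ p])
    fix g assume g: "g \<in> borel_gens (wsub mus rho)"
    have s13: "X13 * cls u \<in> Ann mut"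
    proof -
      have "X13 = X12 * X23 - X23 * X12" by (simp add: X12_X23_comm)
      then have "X13 * cls u = (X12 * X23 - X23 * X12) * cls u" by simp
      then have "X13 * cls u = X12 * (X23 * cls u) - X23 * (X12 * cls u)" by (simp add: left_diff_distrib mult.assoc)
      then show ?thesis using s12 s23 by (simp add: Ann_sub Ann_lmul)
    qed
    from g have "g = fa_word [E12] \<or> g = fa_word [E13] \<or> g = fa_word [E23] \<or>
        g = fa_sub (fa_word [H1]) (fa_const (lam1 mus)) \<or> g = fa_sub (fa_word [H2]) (fa_const (lam2 mus))"
      unfolding borel_gens_def lam1_def lam2_def by blast
    then have "cls g * cls u \<in> Ann mut"
    proof (elim disjE)
      assume "g = fa_word [E12]" then show ?thesis using s12 by (simp add: ugen_def)
    next
      assume "g = fa_word [E13]" then show ?thesis using s13 by (simp add: ugen_def)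
    next
      assume "g = fa_word [E23]" then show ?thesis using s23 by (simp add: ugen_def)
    next
      assume "g = fa_sub (fa_word [H1]) (fa_const (lam1 mus))" then show ?thesis using s1 by (simp add: ugen_def cls_sub scal_def)
    next
      assume "g = fa_sub (fa_word [H2]) (fa_const (lam2 mus))" then show ?thesis using s2 by (simp add: ugen_def cls_sub scal_def)
    qed
    then show "fa_mul g u \<in> verma_ker mut"
      using g u by (intro Ann_cls) (simp_all add: cls_mul FA_borel)
  qed
qed

lemma Y1_shift_mod_Ann: "M * (Y1 + scal t) - scal (lam1 mu + t) * M \<in> Ann mu"
proof -
  have "M * (Y1 + scal t) - scal (lam1 mu + t) * M = M * (Y1 - scal (lam1 mu))"
    by (simp add: scal_add distrib_left right_diff_distrib scal_comm algebra_simps)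
  then show ?thesis by (simp add: Ann_Y1)
qed

lemma Y2_shift_mod_Ann: "M * (Y2 + scal t) - scal (lam2 mu + t) * M \<in> Ann mu"
proof -
  have "M * (Y2 + scal t) - scal (lam2 mu + t) * M = M * (Y2 - scal (lam2 mu))"
    by (simp add: scal_add distrib_left right_diff_distrib scal_comm algebra_simps)
  then show ?thesis by (simp add: Ann_Y2)
qed

lemma X12_pbw_mod_Ann: "X12 * pbw a b c - (scal (of_nat a * (lam1 mu + (1 - of_nat a + of_nat b - of_nat c))) * pbw (a - 1) b c
     - scal (of_nat c) * pbw a (Suc b) (c - 1)) \<in> Ann mu"
proof -
  have "X12 * pbw a b c - (scal (of_nat a * (lam1 mu + (1 - of_nat a + of_nat b - of_nat c))) * pbw (a - 1) b c
     - scal (of_nat c) * pbw a (Suc b) (c - 1))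
    = pbw a b c * X12 + scal (of_nat a) * (pbw (a - 1) b c * (Y1 + scal (1 - of_nat a + of_nat b - of_nat c))
        - scal (lam1 mu + (1 - of_nat a + of_nat b - of_nat c)) * pbw (a - 1) b c)"
    unfolding X12_pbw by (simp add: scal_mult right_diff_distrib mult.assoc)
  also have "\<dots> \<in> Ann mu" by (intro Ann_add Ann_X12 Ann_lmul Y1_shift_mod_Ann)
  finally show ?thesis .
qed

lemma X23_pbw_mod_Ann: "X23 * pbw a b c - (scal (of_nat c) * (pbw (Suc a) b (c - 1) + scal (of_nat b) * pbw a (b - 1) c)
     + scal (of_nat b) * (scal (lam2 mu + (1 - of_nat b - of_nat c)) * pbw a (b - 1) c)) \<in> Ann mu"
proof -
  have "X23 * pbw a b c - (scal (of_nat c) * (pbw (Suc a) b (c - 1) + scal (of_nat b) * pbw a (b - 1) c)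
     + scal (of_nat b) * (scal (lam2 mu + (1 - of_nat b - of_nat c)) * pbw a (b - 1) c))
    = pbw a b c * X23 + scal (of_nat b) * (pbw a (b - 1) c * (Y2 + scal (1 - of_nat b - of_nat c))
        - scal (lam2 mu + (1 - of_nat b - of_nat c)) * pbw a (b - 1) c)"
    unfolding X23_pbw by (simp add: right_diff_distrib)
  also have "\<dots> \<in> Ann mu" by (intro Ann_add Ann_X23 Ann_lmul Y2_shift_mod_Ann)
  finally show ?thesis .
qed

lemma Y1_pbw_mod_Ann: "(Y1 - scal k) * pbw a b c - scal (lam1 mu + (of_nat b - 2 * of_nat a - of_nat c) - k) * pbw a b c \<in> Ann mu"
proof -
  have "(Y1 - scal k) * pbw a b c - scal (lam1 mu + (of_nat b - 2 * of_nat a - of_nat c) - k) * pbw a b c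
     = pbw a b c * (Y1 + scal (of_nat b - 2 * of_nat a - of_nat c)) - scal (lam1 mu + (of_nat b - 2 * of_nat a - of_nat c)) * pbw a b c"
    by (simp add: left_diff_distrib Y1_pbw scal_diff scal_comm)
  then show ?thesis by (simp add: Y1_shift_mod_Ann)
qed

lemma Y2_pbw_mod_Ann: "(Y2 - scal k) * pbw a b c - scal (lam2 mu + (of_nat a - 2 * of_nat b - of_nat c) - k) * pbw a b c \<in> Ann mu"
proof -
  have "(Y2 - scal k) * pbw a b c - scal (lam2 mu + (of_nat a - 2 * of_nat b - of_nat c) - k) * pbw a b c
     = pbw a b c * (Y2 + scal (of_nat a - 2 * of_nat b - of_nat c)) - scal (lam2 mu + (of_nat a - 2 * of_nat b - of_nat c)) * pbw a b c"
    by (simp add: left_diff_distrib Y2_pbw scal_diff scal_comm)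
  then show ?thesis by (simp add: Y2_shift_mod_Ann)
qed


section \<open>Highest weight conditions on normal forms\<close>

lemma sum_index_shift:
  "(\<Sum>z\<le>m. scal (g z * of_nat z) * Q z)
     = (\<Sum>z\<le>m. scal (if z < m then g (Suc z) * of_nat (Suc z) else 0) * Q (Suc z))"
proof -
  have "(\<Sum>z\<le>m. scal (g z * of_nat z) * Q z) = (\<Sum>z<m. scal (g (Suc z) * of_nat (Suc z)) * Q (Suc z))"
    by (simp add: sum.atMost_shift)
  also have "\<dots> = (\<Sum>z\<le>m. scal (if z < m then g (Suc z) * of_nat (Suc z) else 0) * Q (Suc z))"
    by (rule sum.mono_neutral_cong_left) auto
  finally show ?thesis .
qed

lemma Ann_diff_sum: "(\<And>z. z \<in> M \<Longrightarrow> F z - G z \<in> Ann mu) \<Longrightarrow> (\<Sum>z\<in>M. F z) - (\<Sum>z\<in>M. G z) \<in> Ann mu"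
  by (simp add: sum_subtractf[symmetric] Ann_sum)

lemma pbw_sum_lmul: "Z * pbw_sum A B g = (\<Sum>z\<le>min A B. scal (g z) * (Z * pbw (A - z) (B - z) z))"
  by (simp add: pbw_sum_def sum_distrib_left scal_comm_left)

lemma Y1_pbw_sum_in_Ann: assumes "k = lam1 mu + of_nat B - 2 * of_nat A"
  shows "(Y1 - scal k) * pbw_sum A B g \<in> Ann mu"
  unfolding pbw_sum_lmul
proof (rule Ann_sum)
  fix z assume "z \<in> {..min A B}"
  then have z: "z \<le> A" "z \<le> B" by auto
  have "lam1 mu + (of_nat (B - z) - 2 * of_nat (A - z) - of_nat z) - k = 0"
    using z assms by (simp add: of_nat_diff)
  then have "(Y1 - scal k) * pbw (A - z) (B - z) z \<in> Ann mu"
    using Y1_pbw_mod_Ann[of k "A - z" "B - z" z mu] by simp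
  then show "scal (g z) * ((Y1 - scal k) * pbw (A - z) (B - z) z) \<in> Ann mu" by (rule Ann_lmul)
qed

lemma Y2_pbw_sum_in_Ann: assumes "k = lam2 mu + of_nat A - 2 * of_nat B"
  shows "(Y2 - scal k) * pbw_sum A B g \<in> Ann mu"
  unfolding pbw_sum_lmul
proof (rule Ann_sum)
  fix z assume "z \<in> {..min A B}"
  then have z: "z \<le> A" "z \<le> B" by auto
  have "lam2 mu + (of_nat (A - z) - 2 * of_nat (B - z) - of_nat z) - k = 0"
    using z assms by (simp add: of_nat_diff)
  then have "(Y2 - scal k) * pbw (A - z) (B - z) z \<in> Ann mu"
    using Y2_pbw_mod_Ann[of k "A - z" "B - z" z mu] by simp
  then show "scal (g z) * ((Y2 - scal k) * pbw (A - z) (B - z) z) \<in> Ann mu" by (rule Ann_lmul)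
qed

(* Modulo Ann, E12 sends the z-th monomial to multiples of pbw (A - z - 1) (B - z) z and of
   pbw (A - z) (B - z + 1) (z - 1); collecting the coefficient of each monomial gives the recursion. *)
lemma X12_pbw_sum_in_Ann:
  assumes cond: "\<And>z. z \<le> min A B \<Longrightarrow>
     g z * (of_nat (A - z) * (lam1 mu + (1 - of_nat (A - z) + of_nat (B - z) - of_nat z)))
       = (if z < min A B then g (Suc z) * of_nat (Suc z) else 0)"
  shows "X12 * pbw_sum A B g \<in> Ann mu"
proof -
  let ?m = "min A B"
  define G where "G z = scal (g z) * (scal (of_nat (A - z) * (lam1 mu + (1 - of_nat (A - z) + of_nat (B - z) - of_nat z))) * pbw (A - z - 1) (B - z) z
     - scal (of_nat z) * pbw (A - z) (Suc (B - z)) (z - 1))" for z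
  have "X12 * pbw_sum A B g - (\<Sum>z\<le>?m. G z) \<in> Ann mu"
    unfolding pbw_sum_lmul G_def
    by (rule Ann_diff_sum) (simp only: right_diff_distrib[symmetric] Ann_lmul X12_pbw_mod_Ann)
  moreover have "(\<Sum>z\<le>?m. G z) = 0"
  proof -
    have "(\<Sum>z\<le>?m. G z) = (\<Sum>z\<le>?m. scal (g z * (of_nat (A - z) * (lam1 mu + (1 - of_nat (A - z) + of_nat (B - z) - of_nat z)))) * pbw (A - Suc z) (B - z) z)
        - (\<Sum>z\<le>?m. scal (g z * of_nat z) * pbw (A - z) (Suc (B - z)) (z - 1))"
      unfolding G_def sum_subtractf[symmetric]
      by (rule sum.cong) (simp_all add: right_diff_distrib scal_mult mult.assoc)
    also have "(\<Sum>z\<le>?m. scal (g z * of_nat z) * pbw (A - z) (Suc (B - z)) (z - 1))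
        = (\<Sum>z\<le>?m. scal (if z < ?m then g (Suc z) * of_nat (Suc z) else 0) * pbw (A - Suc z) (B - z) z)"
      unfolding sum_index_shift by (rule sum.cong) (auto simp: Suc_diff_Suc)
    also have "(\<Sum>z\<le>?m. scal (g z * (of_nat (A - z) * (lam1 mu + (1 - of_nat (A - z) + of_nat (B - z) - of_nat z)))) * pbw (A - Suc z) (B - z) z)
         = (\<Sum>z\<le>?m. scal (if z < ?m then g (Suc z) * of_nat (Suc z) else 0) * pbw (A - Suc z) (B - z) z)"
      by (rule sum.cong[OF refl], subst cond, simp_all)
    finally show ?thesis by simp
  qed
  ultimately show ?thesis by simp
qed

lemma X23_pbw_sum_in_Ann:
  assumes cond: "\<And>z. z \<le> min A B \<Longrightarrow>
     g z * (of_nat z * of_nat (B - z) + of_nat (B - z) * (lam2 mu + (1 - of_nat (B - z) - of_nat z)))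
       + (if z < min A B then g (Suc z) * of_nat (Suc z) else 0) = 0"
  shows "X23 * pbw_sum A B g \<in> Ann mu"
proof -
  let ?m = "min A B"
  let ?c = "\<lambda>z. of_nat z * of_nat (B - z) + of_nat (B - z) * (lam2 mu + (1 - of_nat (B - z) - of_nat z))"
  define G where "G z = scal (g z) * (scal (of_nat z) * (pbw (Suc (A - z)) (B - z) (z - 1) + scal (of_nat (B - z)) * pbw (A - z) (B - z - 1) z)
     + scal (of_nat (B - z)) * (scal (lam2 mu + (1 - of_nat (B - z) - of_nat z)) * pbw (A - z) (B - z - 1) z))" for z
  have "X23 * pbw_sum A B g - (\<Sum>z\<le>?m. G z) \<in> Ann mu"
    unfolding pbw_sum_lmul G_def
    by (rule Ann_diff_sum) (simp only: right_diff_distrib[symmetric] Ann_lmul X23_pbw_mod_Ann)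
  moreover have "(\<Sum>z\<le>?m. G z) = 0"
  proof -
    have "(\<Sum>z\<le>?m. G z) = (\<Sum>z\<le>?m. scal (g z * of_nat z) * pbw (Suc (A - z)) (B - z) (z - 1))
        + (\<Sum>z\<le>?m. scal (g z * ?c z) * pbw (A - z) (B - Suc z) z)"
      unfolding G_def sum.distrib[symmetric]
      by (rule sum.cong) (simp_all add: distrib_left distrib_right scal_mult scal_add mult.assoc)
    also have "(\<Sum>z\<le>?m. scal (g z * of_nat z) * pbw (Suc (A - z)) (B - z) (z - 1))
        = (\<Sum>z\<le>?m. scal (if z < ?m then g (Suc z) * of_nat (Suc z) else 0) * pbw (A - z) (B - Suc z) z)"
      unfolding sum_index_shift by (rule sum.cong) (auto simp: Suc_diff_Suc)
    also have "\<dots> + (\<Sum>z\<le>?m. scal (g z * ?c z) * pbw (A - z) (B - Suc z) z)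
        = (\<Sum>z\<le>?m. scal (g z * ?c z + (if z < ?m then g (Suc z) * of_nat (Suc z) else 0)) * pbw (A - z) (B - Suc z) z)"
      unfolding sum.distrib[symmetric] by (rule sum.cong) (simp_all add: scal_add distrib_right)
    also have "\<dots> = 0"
      using cond by (intro sum.neutral) simp
    finally show ?thesis .
  qed
  ultimately show ?thesis by simp
qed

lemma hcoeff_Suc: "hcoeff A w (Suc z) * of_nat (Suc z) = hcoeff A w z * ((of_nat A - of_nat z) * (w - of_nat z))"
proof -
  have "(of_nat (Suc z) :: complex) / fact (Suc z) = 1 / fact z"
    using of_nat_neq_0[of z, where ?'a=complex] by (simp del: of_nat_Suc add: fact_Suc)
  then have "hcoeff A w (Suc z) * of_nat (Suc z) = ffall (of_nat A) (Suc z) * ffall w (Suc z) * (1 / fact z)"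
    unfolding hcoeff_def by (metis times_divide_eq_left times_divide_eq_right mult.commute)
  also have "\<dots> = hcoeff A w z * ((of_nat A - of_nat z) * (w - of_nat z))"
    unfolding hcoeff_def ffall_Suc by (simp add: mult_ac)
  finally show ?thesis .
qed

lemma X12_hcoeff_in_Ann:
  assumes h12: "lam1 mu = of_nat A - of_nat B + w - 1" and hB: "B < A \<Longrightarrow> ffall w (Suc B) = 0"
  shows "X12 * pbw_sum A B (hcoeff A w) \<in> Ann mu"
proof (rule X12_pbw_sum_in_Ann)
  fix z assume z: "z \<le> min A B"
  show "hcoeff A w z * (of_nat (A - z) * (lam1 mu + (1 - of_nat (A - z) + of_nat (B - z) - of_nat z)))
       = (if z < min A B then hcoeff A w (Suc z) * of_nat (Suc z) else 0)"
  proof (cases "z < min A B")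
    case True
    then show ?thesis using z unfolding hcoeff_Suc by (simp add: h12 of_nat_diff algebra_simps)
  next
    case False
    then have zm: "z = min A B" using z by (auto simp: min_def)
    show ?thesis
    proof (cases "A \<le> B")
      case True then show ?thesis using zm by simp
    next
      case False
      then have zB: "z = B" "B < A" using zm by auto
      have c0: "hcoeff A w B * (w - of_nat B) = 0"
        using hB[OF zB(2)] by (simp add: hcoeff_def ffall_Suc)
      have e: "lam1 mu + (1 - of_nat (A - B) + of_nat (B - B) - of_nat B) = w - of_nat B"
        using zB(2) by (simp add: h12 of_nat_diff)
      have "hcoeff A w z * (of_nat (A - z) * (lam1 mu + (1 - of_nat (A - z) + of_nat (B - z) - of_nat z))) = of_nat (A - B) * (hcoeff A w B * (w - of_nat B))"
        unfolding zB(1) e by (simp add: mult_ac)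
      then show ?thesis using c0 zm by simp
    qed
  qed
qed

lemma X12_pbw_sum_0_in_Ann: "X12 * pbw_sum 0 B g \<in> Ann mu"
  by (rule X12_pbw_sum_in_Ann) simp

lemma X23_pbw_sum_0_in_Ann: "X23 * pbw_sum A 0 g \<in> Ann mu"
  by (rule X23_pbw_sum_in_Ann) simp

lemma X23_hcoeff_diag_in_Ann: assumes h: "lam2 mu = of_nat A - 1 - w"
  shows "X23 * pbw_sum A A (hcoeff A w) \<in> Ann mu"
proof (rule X23_pbw_sum_in_Ann)
  fix z assume z: "z \<le> min A A"
  show "hcoeff A w z * (of_nat z * of_nat (A - z) + of_nat (A - z) * (lam2 mu + (1 - of_nat (A - z) - of_nat z)))
       + (if z < min A A then hcoeff A w (Suc z) * of_nat (Suc z) else 0) = 0"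
  proof (cases "z < A")
    case True then show ?thesis using z unfolding hcoeff_Suc by (simp add: h of_nat_diff algebra_simps)
  next
    case False then show ?thesis using z by simp
  qed
qed

lemma X23_hcoeff_of_nat_in_Ann: assumes h: "lam2 mu = of_nat B - 1 - of_nat A"
  shows "X23 * pbw_sum A B (hcoeff A (of_nat B)) \<in> Ann mu"
proof (rule X23_pbw_sum_in_Ann)
  fix z assume z: "z \<le> min A B"
  show "hcoeff A (of_nat B) z * (of_nat z * of_nat (B - z) + of_nat (B - z) * (lam2 mu + (1 - of_nat (B - z) - of_nat z)))
       + (if z < min A B then hcoeff A (of_nat B) (Suc z) * of_nat (Suc z) else 0) = 0"
  proof (cases "z < min A B")
    case True then show ?thesis using z unfolding hcoeff_Suc by (simp add: h of_nat_diff algebra_simps)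
  next
    case False
    then have zm: "z = min A B" using z by (auto simp: min_def)
    show ?thesis
    proof (cases "B \<le> A")
      case True then show ?thesis using zm by simp
    next
      case False
      then have zA: "z = A" "A < B" using zm by auto
      have e: "of_nat A * of_nat (B - A) + of_nat (B - A) * (lam2 mu + (1 - of_nat (B - A) - of_nat A)) = (0::complex)"
        using zA(2) by (simp add: h of_nat_diff algebra_simps)
      show ?thesis using zm unfolding zA(1) e by simp
    qed
  qed
qed

lemma X23_hcoeff_0_in_Ann: assumes h: "lam2 mu = of_nat B - 1"
  shows "X23 * pbw_sum A B (hcoeff A 0) \<in> Ann mu"
proof (rule X23_pbw_sum_in_Ann)
  fix z assume z: "z \<le> min A B"
  have c0: "hcoeff A 0 (Suc n) = 0" for n by (simp add: hcoeff_def ffall_Suc_shift)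
  show "hcoeff A 0 z * (of_nat z * of_nat (B - z) + of_nat (B - z) * (lam2 mu + (1 - of_nat (B - z) - of_nat z)))
       + (if z < min A B then hcoeff A 0 (Suc z) * of_nat (Suc z) else 0) = 0"
  proof (cases z)
    case 0 then show ?thesis using h by (simp add: c0)
  next
    case (Suc n) then show ?thesis by (simp add: c0)
  qed
qed


section \<open>Equivariance under M\<close>

definition weight_support :: "nat \<Rightarrow> nat \<Rightarrow> fa \<Rightarrow> bool" where
  "weight_support A B u \<longleftrightarrow> (\<forall>w. u w \<noteq> 0 \<longrightarrow> set w \<subseteq> {E21, E32, E31}
       \<and> count_list w E21 + count_list w E31 = A \<and> count_list w E32 + count_list w E31 = B)"

lemma Mgrp_entries: assumes "m \<in> Mgrp"
  shows "w2 m * w1 m = w3 m" "w3 m * w2 m = w1 m" "w3 m * w1 m = w2 m" "w1 m * w3 m = w2 m"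
    "w1 m \<in> {1, -1}" "w2 m \<in> {1, -1}" "w3 m \<in> {1, -1}"
  using assms unfolding Mgrp_def by auto

lemma prod_gsign_eq: assumes m: "m \<in> Mgrp" and "set w \<subseteq> {E21, E32, E31}"
  shows "(\<Prod>g\<leftarrow>w. gsign m g) = w3 m ^ (count_list w E21 + count_list w E31) * w1 m ^ (count_list w E32 + count_list w E31)"
  using assms(2)
proof (induction w)
  case Nil then show ?case by simp
next
  case (Cons x w)
  then have IH: "(\<Prod>g\<leftarrow>w. gsign m g) = w3 m ^ (count_list w E21 + count_list w E31) * w1 m ^ (count_list w E32 + count_list w E31)"
    and x: "x = E21 \<or> x = E32 \<or> x = E31" by auto
  note P = Mgrp_entries[OF m]
  from x show ?case
  proof (elim disjE)
    assume "x = E21" then show ?thesis using IH P by (simp add: mult_ac)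
  next
    assume "x = E32" then show ?thesis using IH P by (simp add: mult_ac)
  next
    assume "x = E31"
    then show ?thesis using IH P(4) by (simp add: mult_ac flip: P(4))
  qed
qed

lemma sign_power: "x \<in> {1, -1} \<Longrightarrow> (x::complex) ^ n = (if even n then 1 else x)"
  by (auto simp: neg_one_even_power neg_one_odd_power)

lemma absign_sign: "x \<in> {1, -1} \<Longrightarrow> absign b x = (if b then 1 else x)"
  by (auto simp: absign_def)

lemma chi_ratio:
  assumes m: "m \<in> Mgrp" and pB: "fst es = fst et \<longleftrightarrow> even B" and pA: "snd es = snd et \<longleftrightarrow> even A"
  shows "chi es m / chi et m = w3 m ^ A * w1 m ^ B"
proof -
  note P = Mgrp_entries[OF m]
  have r: "(if b then 1 else x) / (if b' then 1 else x) = (if b = b' then 1 else x)" if "x \<in> {1, -1}" for b b' and x :: complex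
    using that by auto
  have "chi es m / chi et m = ((if fst es then 1 else w1 m) / (if fst et then 1 else w1 m)) * ((if snd es then 1 else w3 m) / (if snd et then 1 else w3 m))"
    unfolding chi_def absign_sign[OF P(5)] absign_sign[OF P(7)] by simp
  also have "\<dots> = (if fst es = fst et then 1 else w1 m) * (if snd es = snd et then 1 else w3 m)"
    using r[OF P(5)] r[OF P(7)] by simp
  also have "\<dots> = w3 m ^ A * w1 m ^ B"
    using pA pB by (simp add: sign_power[OF P(5)] sign_power[OF P(7)])
  finally show ?thesis .
qed

lemma Ad_eq_chi_ratio:
  assumes sw: "weight_support A B u" and pB: "fst es = fst et \<longleftrightarrow> even B" and pA: "snd es = snd et \<longleftrightarrow> even A"
  shows "\<forall>m\<in>Mgrp. fa_sub (fa_Ad m u) (fa_smul (chi es m / chi et m) u) \<in> verma_ker mut"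
proof
  fix m assume m: "m \<in> Mgrp"
  have "fa_sub (fa_Ad m u) (fa_smul (chi es m / chi et m) u) = (\<lambda>_. 0)"
  proof (rule ext)
    fix w
    show "fa_sub (fa_Ad m u) (fa_smul (chi es m / chi et m) u) w = 0"
    proof (cases "u w = 0")
      case True then show ?thesis by (simp add: fa_sub_def fa_Ad_def fa_smul_def)
    next
      case False
      then have "set w \<subseteq> {E21, E32, E31}" "count_list w E21 + count_list w E31 = A" "count_list w E32 + count_list w E31 = B"
        using sw by (auto simp: weight_support_def)
      then have "(\<Prod>g\<leftarrow>w. gsign m g) = chi es m / chi et m"
        using prod_gsign_eq[OF m] chi_ratio[OF m pB pA] by simp
      then show ?thesis by (simp add: fa_sub_def fa_Ad_def fa_smul_def)
    qed
  qed
  then show "fa_sub (fa_Ad m u) (fa_smul (chi es m / chi et m) u) \<in> verma_ker mut"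
    by (simp add: verma_ker.vk_zero)
qed

lemma gB_homI:
  assumes u: "u \<in> FA" and cu: "cls u = pbw_sum A B g"
    and s12: "X12 * pbw_sum A B g \<in> Ann mut" and s23: "X23 * pbw_sum A B g \<in> Ann mut"
    and l1: "lam1 mus = lam1 mut + of_nat B - 2 * of_nat A" and l2: "lam2 mus = lam2 mut + of_nat A - 2 * of_nat B"
    and sw: "weight_support A B u" and pB: "fst es = fst et \<longleftrightarrow> even B" and pA: "snd es = snd et \<longleftrightarrow> even A"
  shows "gB_hom mus es mut et u"
  unfolding gB_hom_def
proof (intro conjI)
  show "u \<in> FA" by (rule u)
  show "\<forall>p\<in>verma_ker mus. fa_mul p u \<in> verma_ker mut"
    by (rule verma_ker_mul_criterion[OF u]) (simp_all only: cu s12 s23 Y1_pbw_sum_in_Ann[OF l1] Y2_pbw_sum_in_Ann[OF l2])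
  show "\<forall>m\<in>Mgrp. fa_sub (fa_Ad m u) (fa_smul (chi es m / chi et m) u) \<in> verma_ker mut"
    by (rule Ad_eq_chi_ratio[OF sw pB pA])
qed

lemma count_list_replicate: "count_list (replicate n x) y = (if y = x then n else 0)"
  by (induction n) auto

lemma weight_support_u1: "weight_support n 0 (u1 n)"
  by (auto simp: weight_support_def u1_def fa_word_def count_list_replicate split: if_splits)
lemma weight_support_u2: "weight_support 0 n (u2 n)"
  by (auto simp: weight_support_def u2_def fa_word_def count_list_replicate split: if_splits)

lemma weight_support_fa_sym: "m \<le> a \<Longrightarrow> m \<le> b \<Longrightarrow> weight_support a b (fa_sym (a - m) (b - m) m)"
  by (auto simp: weight_support_def fa_sym_def orderings_def split: if_splits)

lemma weight_support_sum:
  assumes "\<And>m. m \<in> M \<Longrightarrow> weight_support A B (f m)"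
  shows "weight_support A B (\<lambda>v. \<Sum>m\<in>M. c m * f m v)"
  using assms unfolding weight_support_def by (metis (mono_tags, lifting) mult_zero_right sum.neutral)

lemma weight_support_upm: "weight_support a b (upm sg a b)"
  unfolding upm_def by (intro weight_support_sum weight_support_fa_sym) auto

lemma weight_support_uc: "weight_support n n (uc s n)"
  unfolding uc_def by (intro weight_support_sum weight_support_fa_sym) auto

lemma gB_hom_u1:
  assumes "lam1 mut = of_nat n - 1" "lam1 mus = lam1 mut - 2 * of_nat n" "lam2 mus = lam2 mut + of_nat n"
    "fst es = fst et" "snd es = snd et \<longleftrightarrow> even n"
  shows "gB_hom mus es mut et (u1 n)"
  by (rule gB_homI[OF FA_u1 cls_u1[of n 0] X12_hcoeff_in_Ann X23_pbw_sum_0_in_Ann _ _ weight_support_u1])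
     (use assms in \<open>simp_all add: ffall_Suc_shift\<close>)

lemma gB_hom_u2:
  assumes "lam2 mut = of_nat n - 1" "lam1 mus = lam1 mut + of_nat n" "lam2 mus = lam2 mut - 2 * of_nat n"
    "fst es = fst et \<longleftrightarrow> even n" "snd es = snd et"
  shows "gB_hom mus es mut et (u2 n)"
  by (rule gB_homI[OF FA_u2 cls_u2[of n "of_nat n"] X12_pbw_sum_0_in_Ann X23_hcoeff_of_nat_in_Ann _ _ weight_support_u2])
     (use assms in \<open>simp_all\<close>)

lemma gB_hom_upm_plus:
  assumes "lam1 mut = of_nat a - 1" "lam2 mut = of_nat b - 1 - of_nat a"
    "lam1 mus = lam1 mut + of_nat b - 2 * of_nat a" "lam2 mus = lam2 mut + of_nat a - 2 * of_nat b"
    "fst es = fst et \<longleftrightarrow> even b" "snd es = snd et \<longleftrightarrow> even a"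
  shows "gB_hom mus es mut et (upm 1 a b)"
  by (rule gB_homI[OF FA_upm cls_upm_plus X12_hcoeff_in_Ann X23_hcoeff_of_nat_in_Ann _ _ weight_support_upm])
     (use assms in \<open>simp_all add: ffall_nat_zero\<close>)

lemma gB_hom_upm_minus:
  assumes "lam1 mut = of_nat a - of_nat b - 1" "lam2 mut = of_nat b - 1"
    "lam1 mus = lam1 mut + of_nat b - 2 * of_nat a" "lam2 mus = lam2 mut + of_nat a - 2 * of_nat b"
    "fst es = fst et \<longleftrightarrow> even b" "snd es = snd et \<longleftrightarrow> even a"
  shows "gB_hom mus es mut et (upm (-1) a b)"
  by (rule gB_homI[OF FA_upm cls_upm_minus X12_hcoeff_in_Ann X23_hcoeff_0_in_Ann _ _ weight_support_upm])
     (use assms in \<open>simp_all add: ffall_Suc_shift\<close>)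

lemma gB_hom_uc:
  assumes "lam1 mut = (of_int s + of_nat n) / 2 - 1" "lam2 mut = of_nat n - 1 - (of_int s + of_nat n) / 2"
    "lam1 mus = lam1 mut - of_nat n" "lam2 mus = lam2 mut - of_nat n"
    "fst es = fst et \<longleftrightarrow> even n" "snd es = snd et \<longleftrightarrow> even n"
  shows "gB_hom mus es mut et (uc s n)"
  by (rule gB_homI[OF FA_uc cls_uc X12_hcoeff_in_Ann X23_hcoeff_diag_in_Ann _ _ weight_support_uc])
     (use assms in \<open>simp_all\<close>)


lemma map_eq_vmapI: "X \<in> FA \<Longrightarrow> Q \<in> FA \<Longrightarrow> cls X = cls Q \<Longrightarrow> map_eq mu (vmap X) (vmap Q)"
  unfolding map_eq_def vmap_def by (auto intro!: verma_ker_of_cls_eq simp: cls_mul)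

lemma vmap_comp: "vmap q \<circ> vmap p = vmap (fa_mul p q)"
  by (simp add: vmap_def fun_eq_iff fa_mul_assoc)

lemmas weight_simps = lam1_eq lam2_eq w1_def w2_def w3_def theta_def theta'_def sA_def sB_def sG_def

theorem theorem8p6:
  fixes k l :: nat
  assumes "k \<ge> 1" and "l \<ge> 1"
  shows
  \<comment> \<open>(1)\<close>
  "(k < l \<longrightarrow>
     gB_hom (sB (sA (theta k l))) (sgnpow l, sgnpow k) (sA (theta k l)) (True, sgnpow k) (u2 l)
   \<and> gB_hom (sA (theta k l)) (True, sgnpow k) (theta k l) (True, True) (u1 k)
   \<and> gB_hom (sG (theta k l)) (sgnpow l, sgnpow l) (sB (sA (theta k l))) (sgnpow l, sgnpow k) (u1 (l - k))
   \<and> gB_hom (sB (sA (theta k l))) (sgnpow l, sgnpow k) (theta k l) (True, True) (upm 1 k l)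
   \<and> gB_hom (sG (theta k l)) (sgnpow l, sgnpow l) (sA (theta k l)) (True, sgnpow k) (upm (-1) (l - k) l)
   \<and> gB_hom (sG (theta k l)) (sgnpow l, sgnpow l) (theta k l) (True, True) (uc (2 * int k - int l) l)
   \<and> map_eq (theta k l) (vmap (upm 1 k l)) (vmap (u1 k) \<circ> vmap (u2 l))
   \<and> map_eq (sA (theta k l)) (vmap (upm (-1) (l - k) l)) (vmap (u2 l) \<circ> vmap (u1 (l - k)))
   \<and> map_eq (theta k l) (vmap (uc (2 * int k - int l) l)) (vmap (upm 1 k l) \<circ> vmap (u1 (l - k)))
   \<and> map_eq (theta k l) (vmap (uc (2 * int k - int l) l)) (vmap (u1 k) \<circ> vmap (upm (-1) (l - k) l))
   \<and> map_eq (theta k l) (vmap (uc (2 * int k - int l) l))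
       (vmap (u1 k) \<circ> vmap (u2 l) \<circ> vmap (u1 (l - k))))
  \<comment> \<open>(2)\<close>
  \<and> (k > l \<longrightarrow>
     gB_hom (sB (sA (theta k l))) (sgnpow l, sgnpow k) (sG (theta k l)) (sgnpow l, sgnpow l) (u1 (k - l))
   \<and> gB_hom (sG (theta k l)) (sgnpow l, sgnpow l) (theta k l) (True, True) (uc (2 * int k - int l) l)
   \<and> gB_hom (sB (sA (theta k l))) (sgnpow l, sgnpow k) (sA (theta k l)) (True, sgnpow k) (u2 l)
   \<and> gB_hom (sA (theta k l)) (True, sgnpow k) (theta k l) (True, True) (u1 k)
   \<and> gB_hom (sB (sA (theta k l))) (sgnpow l, sgnpow k) (theta k l) (True, True) (upm 1 k l)
   \<and> map_eq (theta k l) (vmap (uc (2 * int k - int l) l) \<circ> vmap (u1 (k - l))) (vmap (upm 1 k l))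
   \<and> map_eq (theta k l) (vmap (upm 1 k l)) (vmap (u1 k) \<circ> vmap (u2 l)))
  \<comment> \<open>(3)\<close>
  \<and> (k > l \<longrightarrow>
     gB_hom (sG (theta' k l)) (sgnpow k, sgnpow k) (sA (sB (theta' k l))) (sgnpow l, sgnpow k) (u2 (k - l))
   \<and> gB_hom (sA (sB (theta' k l))) (sgnpow l, sgnpow k) (sB (theta' k l)) (sgnpow l, True) (u1 k)
   \<and> gB_hom (sB (theta' k l)) (sgnpow l, True) (theta' k l) (True, True) (u2 l)
   \<and> gB_hom (sG (theta' k l)) (sgnpow k, sgnpow k) (sB (theta' k l)) (sgnpow l, True) (upm 1 k (k - l))
   \<and> gB_hom (sA (sB (theta' k l))) (sgnpow l, sgnpow k) (theta' k l) (True, True) (upm (-1) k l)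
   \<and> gB_hom (sG (theta' k l)) (sgnpow k, sgnpow k) (theta' k l) (True, True) (uc (int k - 2 * int l) k)
   \<and> map_eq (sB (theta' k l)) (vmap (upm 1 k (k - l))) (vmap (u1 k) \<circ> vmap (u2 (k - l)))
   \<and> map_eq (theta' k l) (vmap (upm (-1) k l)) (vmap (u2 l) \<circ> vmap (u1 k))
   \<and> map_eq (theta' k l) (vmap (uc (int k - 2 * int l) k)) (vmap (u2 l) \<circ> vmap (upm 1 k (k - l)))
   \<and> map_eq (theta' k l) (vmap (uc (int k - 2 * int l) k)) (vmap (upm (-1) k l) \<circ> vmap (u2 (k - l)))
   \<and> map_eq (theta' k l) (vmap (uc (int k - 2 * int l) k))
       (vmap (u2 l) \<circ> vmap (u1 k) \<circ> vmap (u2 (k - l))))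
  \<comment> \<open>(4)\<close>
  \<and> (k < l \<longrightarrow>
     gB_hom (sA (sB (theta' k l))) (sgnpow l, sgnpow k) (sG (theta' k l)) (sgnpow k, sgnpow k) (u2 (l - k))
   \<and> gB_hom (sG (theta' k l)) (sgnpow k, sgnpow k) (theta' k l) (True, True) (uc (int k - 2 * int l) k)
   \<and> gB_hom (sA (sB (theta' k l))) (sgnpow l, sgnpow k) (sB (theta' k l)) (sgnpow l, True) (u1 k)
   \<and> gB_hom (sB (theta' k l)) (sgnpow l, True) (theta' k l) (True, True) (u2 l)
   \<and> gB_hom (sA (sB (theta' k l))) (sgnpow l, sgnpow k) (theta' k l) (True, True) (upm (-1) k l)
   \<and> map_eq (theta' k l) (vmap (uc (int k - 2 * int l) k) \<circ> vmap (u2 (l - k))) (vmap (upm (-1) k l))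
   \<and> map_eq (theta' k l) (vmap (upm (-1) k l)) (vmap (u2 l) \<circ> vmap (u1 k)))
  \<comment> \<open>(5)\<close>
  \<and> (k = l \<longrightarrow>
     gB_hom (sG (theta k k)) (sgnpow k, sgnpow k) (theta k k) (True, True) (uc (int k) k)
   \<and> gB_hom (sG (theta k k)) (sgnpow k, sgnpow k) (theta k k) (True, True) (upm 1 k k)
   \<and> gB_hom (sG (theta k k)) (sgnpow k, sgnpow k) (sA (theta k k)) (True, sgnpow k) (u2 k)
   \<and> gB_hom (sA (theta k k)) (True, sgnpow k) (theta k k) (True, True) (u1 k)
   \<and> map_eq (theta k k) (vmap (uc (int k) k)) (vmap (upm 1 k k))
   \<and> map_eq (theta k k) (vmap (upm 1 k k)) (vmap (u1 k) \<circ> vmap (u2 k)))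
  \<comment> \<open>(6)\<close>
  \<and> (k = l \<longrightarrow>
     gB_hom (sG (theta' k k)) (sgnpow k, sgnpow k) (theta' k k) (True, True) (uc (- int k) k)
   \<and> gB_hom (sG (theta' k k)) (sgnpow k, sgnpow k) (theta' k k) (True, True) (upm (-1) k k)
   \<and> gB_hom (sG (theta' k k)) (sgnpow k, sgnpow k) (sB (theta' k k)) (sgnpow k, True) (u1 k)
   \<and> gB_hom (sB (theta' k k)) (sgnpow k, True) (theta' k k) (True, True) (u2 k)
   \<and> map_eq (theta' k k) (vmap (uc (- int k) k)) (vmap (upm (-1) k k))
   \<and> map_eq (theta' k k) (vmap (upm (-1) k k)) (vmap (u2 k) \<circ> vmap (u1 k)))"
  \<comment> \<open>the remaining goals are the composition identities in U and, for each homomorphism,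
    linear relations between the coordinates of the weights and parity conditions on k, l\<close>
  unfolding vmap_comp
  by (intro conjI impI map_eq_vmapI gB_hom_u1 gB_hom_u2 gB_hom_upm_plus gB_hom_upm_minus gB_hom_uc)
     (simp_all add: cls_mul mult.assoc composition_identities,
      simp_all add: weight_simps sgnpow_def of_nat_diff field_simps eq_commute)

end
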